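(* Let $G=(\pi,R)$ be a monogamy-of-entanglement game with $X=\{0,1\}$, $\pi$ uniform on $X$, and each $R(a|x)$ an orthogonal projection. Let $c(G)=\max_{a,b\in A}\big\|\sqrt{R(a|0)}\sqrt{R(b|1)}\big\|^2$. Then for every positive integer $n$, $\omega^\ast(G^n)\ \ge\ \omega(G^n)\ \ge\ \left(\frac12+\frac12\sqrt{c(G)}\right)^n.$
   Context: A monogamy-of-entanglement game $G=(\pi,R)$ consists of a finite nonempty question set $X$, a probability distribution $\pi$ on $X$, a finite nonempty answer set $A$, a positive integer $m$, and positive semidefinite $m\times m$ matrices $R(a|x)$ with $\sum_{a\in A}R(a|x)=\mathbb{1}$ for each $x\in X$. The quantum value $\omega^\ast(G)$ is the supremum, over finite-dimensional Hilbert spaces $\mathcal{A},\mathcal{B}$, density operators $\rho$ on $\mathbb{C}^m\otimes\mathcal{A}\otimes\mathcal{B}$, and POVMs $\{A^x_a:a\in A\}$ on $\mathcal{A}$, $\{B^x_a:a\in A\}$ on $\mathcal{B}$ (one for each $x$), of $\sum_x\pi(x)\sum_a\mathrm{Tr}((R(a|x)\otimes A^x_a\otimes B^x_a)\rho)$. The unentangled value $\omega(G)$ is the same supremum over fully separable $\rho$, equivalently $\omega(G)=\max_{f:X\to A}\|\sum_x\pi(x)R(f(x)|x)\|$ (operator norm). The $n$-fold parallel repetition $G^n$ is the monogamy-of-entanglement game with question set $X^n$, distribution $\pi^n(x_1,\dots,x_n)=\prod_i\pi(x_i)$, answer set $A^n$, referee space $(\mathbb{C}^m)^{\otimes n}$,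 and measurement operators $R(a_1\cdots a_n|x_1\cdots x_n)=R(a_1|x_1)\otimes\cdots\otimes R(a_n|x_n)$. *)

theory Defs
  imports "HOL-Analysis.Analysis" "Jordan_Normal_Form.Matrix"
begin

definition adj :: "complex mat \<Rightarrow> complex mat" where
  "adj M = mat (dim_col M) (dim_row M) (\<lambda>(i,j). cnj (M $$ (j,i)))"

definition cinner :: "complex vec \<Rightarrow> complex vec \<Rightarrow> complex" where
  "cinner v w = (\<Sum>i<dim_vec v. cnj (v $ i) * w $ i)"

definition vnorm :: "complex vec \<Rightarrow> real" where
  "vnorm v = sqrt (\<Sum>i<dim_vec v. (cmod (v $ i))\<^sup>2)"

definition op_norm :: "complex mat \<Rightarrow> real" where
  "op_norm M = Sup {vnorm (M *\<^sub>v v) | v. v \<in> carrier_vec (dim_col M) \<and> vnorm v = 1}"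

definition mtrace :: "complex mat \<Rightarrow> complex" where
  "mtrace M = (\<Sum>i<dim_row M. M $$ (i,i))"

definition kron :: "complex mat \<Rightarrow> complex mat \<Rightarrow> complex mat" where
  "kron A B = mat (dim_row A * dim_row B) (dim_col A * dim_col B)
     (\<lambda>(i,j). A $$ (i div dim_row B, j div dim_col B) * B $$ (i mod dim_row B, j mod dim_col B))"

definition psd :: "nat \<Rightarrow> complex mat \<Rightarrow> bool" where
  "psd d M \<longleftrightarrow> M \<in> carrier_mat d d \<and> adj M = M \<and>
     (\<forall>v \<in> carrier_vec d. 0 \<le> Re (cinner v (M *\<^sub>v v)))"

definition density :: "nat \<Rightarrow> complex mat \<Rightarrow> bool" where
  "density d \<rho> \<longleftrightarrow> psd d \<rho> \<and> mtrace \<rho> = 1"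

definition orth_proj :: "nat \<Rightarrow> complex mat \<Rightarrow> bool" where
  "orth_proj d P \<longleftrightarrow> P \<in> carrier_mat d d \<and> adj P = P \<and> P * P = P"

definition msqrt :: "complex mat \<Rightarrow> complex mat" where
  "msqrt M = (THE S. psd (dim_row M) S \<and> S * S = M)"

definition povm :: "nat \<Rightarrow> 'a set \<Rightarrow> ('a \<Rightarrow> complex mat) \<Rightarrow> bool" where
  "povm d Ans P \<longleftrightarrow> (\<forall>a\<in>Ans. psd d (P a)) \<and>
     mat d d (\<lambda>(i,j). \<Sum>a\<in>Ans. P a $$ (i,j)) = 1\<^sub>m d"

text \<open>A game is given by question set Q, distribution pd, answer set Ans, referee
  dimension m and measurements R a x.\<close>
definition moe_game :: "'q set \<Rightarrow> ('q \<Rightarrow> real) \<Rightarrow> 'a set \<Rightarrow> nat \<Rightarrow> ('a \<Rightarrow> 'q \<Rightarrow> complex mat) \<Rightarrow> bool" where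
  "moe_game Q pd Ans m R \<longleftrightarrow> finite Q \<and> Q \<noteq> {} \<and> (\<forall>x\<in>Q. 0 \<le> pd x) \<and> sum pd Q = 1 \<and>
     finite Ans \<and> Ans \<noteq> {} \<and> m > 0 \<and> (\<forall>x\<in>Q. povm m Ans (\<lambda>a. R a x))"

text \<open>Winning probability of a strategy (dA, dB, rho, A, B); rho lives on C^m (x) C^dA (x) C^dB.\<close>
definition win_prob :: "'q set \<Rightarrow> ('q \<Rightarrow> real) \<Rightarrow> 'a set \<Rightarrow> ('a \<Rightarrow> 'q \<Rightarrow> complex mat) \<Rightarrow>
    complex mat \<Rightarrow> ('q \<Rightarrow> 'a \<Rightarrow> complex mat) \<Rightarrow> ('q \<Rightarrow> 'a \<Rightarrow> complex mat) \<Rightarrow> real" where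
  "win_prob Q pd Ans R \<rho> PA PB =
     (\<Sum>x\<in>Q. pd x * (\<Sum>a\<in>Ans. Re (mtrace (kron (kron (R a x) (PA x a)) (PB x a) * \<rho>))))"

definition strategy :: "'q set \<Rightarrow> 'a set \<Rightarrow> nat \<Rightarrow> nat \<Rightarrow> nat \<Rightarrow>
    complex mat \<Rightarrow> ('q \<Rightarrow> 'a \<Rightarrow> complex mat) \<Rightarrow> ('q \<Rightarrow> 'a \<Rightarrow> complex mat) \<Rightarrow> bool" where
  "strategy Q Ans m dA dB \<rho> PA PB \<longleftrightarrow> 0 < dA \<and> 0 < dB \<and> density (m * dA * dB) \<rho> \<and>
     (\<forall>x\<in>Q. povm dA Ans (PA x)) \<and> (\<forall>x\<in>Q. povm dB Ans (PB x))"

definition fully_separable :: "nat \<Rightarrow> nat \<Rightarrow> nat \<Rightarrow> complex mat \<Rightarrow> bool" where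
  "fully_separable d1 d2 d3 \<rho> \<longleftrightarrow> (\<exists>(k::nat) p \<rho>1 \<rho>2 \<rho>3.
     (\<forall>i<k. 0 \<le> p i \<and> density d1 (\<rho>1 i) \<and> density d2 (\<rho>2 i) \<and> density d3 (\<rho>3 i)) \<and>
     (\<Sum>i<k. p i) = (1::real) \<and>
     \<rho> = mat (d1*d2*d3) (d1*d2*d3)
       (\<lambda>(r,c). \<Sum>i<k. complex_of_real (p i) * kron (kron (\<rho>1 i) (\<rho>2 i)) (\<rho>3 i) $$ (r,c)))"

definition qvalue :: "'q set \<Rightarrow> ('q \<Rightarrow> real) \<Rightarrow> 'a set \<Rightarrow> nat \<Rightarrow> ('a \<Rightarrow> 'q \<Rightarrow> complex mat) \<Rightarrow> real" where
  "qvalue Q pd Ans m R = Sup {win_prob Q pd Ans R \<rho> PA PB | dA dB \<rho> PA PB.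
      strategy Q Ans m dA dB \<rho> PA PB}"

definition uvalue :: "'q set \<Rightarrow> ('q \<Rightarrow> real) \<Rightarrow> 'a set \<Rightarrow> nat \<Rightarrow> ('a \<Rightarrow> 'q \<Rightarrow> complex mat) \<Rightarrow> real" where
  "uvalue Q pd Ans m R = Sup {win_prob Q pd Ans R \<rho> PA PB | dA dB \<rho> PA PB.
      strategy Q Ans m dA dB \<rho> PA PB \<and> fully_separable m dA dB \<rho>}"

definition rep_set :: "nat \<Rightarrow> 'b set \<Rightarrow> 'b list set" where
  "rep_set n S = {xs. length xs = n \<and> set xs \<subseteq> S}"

definition rep_pi :: "('q \<Rightarrow> real) \<Rightarrow> 'q list \<Rightarrow> real" where
  "rep_pi pd xs = prod_list (map pd xs)"

text \<open>R(a_1..a_n | x_1..x_n) = R(a_1|x_1) (x) ... (x) R(a_n|x_n) (for equal lengths).\<close>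
definition rep_R :: "('a \<Rightarrow> 'q \<Rightarrow> complex mat) \<Rightarrow> 'a list \<Rightarrow> 'q list \<Rightarrow> complex mat" where
  "rep_R R as xs = foldr (\<lambda>(a,x) M. kron (R a x) M) (zip as xs) (1\<^sub>m 1)"

end

theory Submission
  imports Defs
begin

text \<open>The bound is attained by unentangled strategies. The referee's system starts in a pure state
  \<psi> and, in every round, Alice and Bob answer a fixed a to question 0 and a fixed b to question 1;
  the rounds are then independent and each is won with probability
  (|R(a|0) \<psi>|^2 + |R(b|1) \<psi>|^2) / 2. For projections P, Q and t < |PQ|, take a unit vector q in
  the range of Q with |Pq| > t; the normalisation of q + Pq / |Pq| makes this probability at least
  (1 + t) / 2. Since the square root of a projection is the projection itself, sqrt c is such a
  norm |PQ|. The comparison with the quantum value holds for every game: separable strategies are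
  strategies, and no strategy wins with probability above 1, by the completeness of the three
  measurements.\<close>

section \<open>Positive semidefinite forms\<close>

text \<open>Forms are handled through their entry functions, so that Schur complements need no matrix
  bookkeeping.\<close>
definition qform :: "nat \<Rightarrow> (nat \<Rightarrow> nat \<Rightarrow> complex) \<Rightarrow> (nat \<Rightarrow> complex) \<Rightarrow> complex" where
  "qform d N w = (\<Sum>r<d. \<Sum>c<d. cnj (w r) * N r c * w c)"

definition psd_form :: "nat \<Rightarrow> (nat \<Rightarrow> nat \<Rightarrow> complex) \<Rightarrow> bool" where
  "psd_form d N \<longleftrightarrow> (\<forall>r<d. \<forall>c<d. N r c = cnj (N c r)) \<and> (\<forall>w. 0 \<le> Re (qform d N w))"

definition is_gram :: "nat \<Rightarrow> (nat \<Rightarrow> nat \<Rightarrow> complex) \<Rightarrow> bool" where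
  "is_gram d N \<longleftrightarrow> (\<exists>(K::nat) V. \<forall>r<d. \<forall>c<d. N r c = (\<Sum>i<K. V i r * cnj (V i c)))"

lemma qform_add_basis:
  assumes "k < d"
  shows "qform d N (\<lambda>r. w r + s * (if r = k then 1 else 0)) =
    qform d N w + cnj s * (\<Sum>c<d. N k c * w c) + s * (\<Sum>r<d. cnj (w r) * N r k) + cnj s * s * N k k"
proof -
  have expand: "cnj (w r + s * (if r = k then 1 else 0)) * N r c * (w c + s * (if c = k then 1 else 0))
     = cnj (w r) * N r c * w c + (if r = k then cnj s * N k c * w c else 0)
       + (if c = k then s * cnj (w r) * N r k else 0)
       + (if r = k \<and> c = k then cnj s * s * N k k else 0)" for r c
    by (auto simp: algebra_simps)
  have row: "(\<Sum>r<d. \<Sum>c<d. (if r = k then f c else (0::complex))) = (\<Sum>c<d. f c)" for f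
  proof -
    have "(\<Sum>r<d. \<Sum>c<d. (if r = k then f c else 0)) = (\<Sum>r<d. if r = k then (\<Sum>c<d. f c) else 0)"
      by (rule sum.cong) auto
    then show ?thesis using assms by simp
  qed
  have col: "(\<Sum>r<d. \<Sum>c<d. (if c = k then f r else (0::complex))) = (\<Sum>r<d. f r)" for f
    using assms by simp
  have diag: "(\<Sum>r<d. \<Sum>c<d. (if r = k \<and> c = k then x else (0::complex))) = x" for x
  proof -
    have "(\<Sum>r<d. \<Sum>c<d. (if r = k \<and> c = k then x else 0)) = (\<Sum>r<d. if r = k then x else 0)"
      by (rule sum.cong) (auto simp: assms)
    then show ?thesis using assms by simp
  qed
  show ?thesis unfolding qform_def expand sum.distrib row col diag
    by (simp add: sum_distrib_left mult.assoc)
qed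

lemma qform_basis: "k < d \<Longrightarrow> qform d N (\<lambda>r. if r = k then 1 else 0) = N k k"
  using qform_add_basis[of k d N "\<lambda>r. 0" 1] by (simp add: qform_def)

lemma qform_hermitian_cnj:
  assumes "\<forall>r<d. \<forall>c<d. N r c = cnj (N c r)"
  shows "cnj (qform d N w) = qform d N w"
proof -
  have "cnj (qform d N w) = (\<Sum>r<d. \<Sum>c<d. cnj (w c) * N c r * w r)"
    unfolding qform_def cnj_sum
  proof (intro sum.cong refl)
    fix r c assume "r \<in> {..<d}" "c \<in> {..<d}"
    then have "N c r = cnj (N r c)" using assms by blast
    then show "cnj (cnj (w r) * N r c * w c) = cnj (w c) * N c r * w r"
      by (simp add: mult.commute mult.left_commute)
  qed
  also have "\<dots> = qform d N w" unfolding qform_def by (rule sum.swap)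
  finally show ?thesis .
qed

lemma psd_form_diag:
  assumes "psd_form d N" "k < d"
  shows "N k k = complex_of_real (Re (N k k))" "0 \<le> Re (N k k)"
proof -
  have "N k k = cnj (N k k)" using assms unfolding psd_form_def by blast
  then show "N k k = complex_of_real (Re (N k k))" by (simp add: complex_eq_iff)
  have "0 \<le> Re (qform d N (\<lambda>r. if r = k then 1 else 0))"
    using assms(1) unfolding psd_form_def by blast
  then show "0 \<le> Re (N k k)" using qform_basis[OF assms(2), of N] by simp
qed

text \<open>A nonnegative Hermitian form with a vanishing diagonal entry vanishes on that row: otherwise
  moving a test vector along the row direction would make the form negative.\<close>
lemma psd_form_zero_row:
  assumes P: "psd_form d N" and k: "k < d" and c: "c < d" and z: "N k k = 0"
  shows "N k c = 0"
proof (rule ccontr)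
  assume nz: "N k c \<noteq> 0"
  define y where "y = N k c"
  have herm: "N c k = cnj y" using P k c unfolding psd_form_def y_def by blast
  define x :: real where "x = (\<bar>Re (N c c)\<bar> + 1) / (2 * (cmod y)^2)"
  have ypos: "0 < (cmod y)^2" using nz y_def by simp
  define s where "s = - complex_of_real x * y"
  let ?w = "\<lambda>r. if r = c then 1 else (0::complex)"
  have "qform d N (\<lambda>r. ?w r + s * (if r = k then 1 else 0)) =
        qform d N ?w + cnj s * (\<Sum>c'<d. N k c' * ?w c') + s * (\<Sum>r<d. cnj (?w r) * N r k) + cnj s * s * N k k"
    by (rule qform_add_basis[OF k])
  also have "(\<Sum>r<d. cnj (?w r) * N r k) = N c k"
  proof -
    have "(\<Sum>r<d. cnj (?w r) * N r k) = (\<Sum>r<d. if r = c then N r k else 0)"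
      by (rule sum.cong) auto
    then show ?thesis using c by simp
  qed
  also have "(\<Sum>c'<d. N k c' * ?w c') = N k c"
  proof -
    have "(\<Sum>c'<d. N k c' * ?w c') = (\<Sum>c'<d. if c' = c then N k c' else 0)"
      by (rule sum.cong) auto
    then show ?thesis using c by simp
  qed
  also have "qform d N ?w + cnj s * N k c + s * N c k + cnj s * s * N k k = N c c + cnj s * y + s * cnj y"
    using qform_basis[OF c, of N] z herm by (simp add: y_def)
  finally have eq: "qform d N (\<lambda>r. ?w r + s * (if r = k then 1 else 0)) = N c c + cnj s * y + s * cnj y" .
  have "Re (cnj s * y + s * cnj y) = - 2 * x * (cmod y)^2"
  proof -
    have cm: "(cmod y)^2 = Re y * Re y + Im y * Im y" by (metis cmod_power2 power2_eq_square)
    show ?thesis unfolding s_def cm by (simp add: algebra_simps)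
  qed
  also have "\<dots> = - (\<bar>Re (N c c)\<bar> + 1)" unfolding x_def using ypos by (simp add: field_simps)
  finally have "Re (qform d N (\<lambda>r. ?w r + s * (if r = k then 1 else 0))) = Re (N c c) - (\<bar>Re (N c c)\<bar> + 1)"
    unfolding eq by simp
  moreover have "0 \<le> Re (qform d N (\<lambda>r. ?w r + s * (if r = k then 1 else 0)))" using P unfolding psd_form_def by blast
  ultimately show False by linarith
qed

lemma psd_form_schur_step:
  assumes P: "psd_form d N" and k: "k < d" and nz: "N k k \<noteq> 0"
  shows "psd_form d (\<lambda>r c. N r c - N r k * N k c / N k k)" (is "psd_form d ?N'")
proof -
  have herm: "\<And>r c. r < d \<Longrightarrow> c < d \<Longrightarrow> N r c = cnj (N c r)" using P unfolding psd_form_def by blast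
  have real: "cnj (N k k) = N k k" using herm[OF k k] by simp
  have herm': "?N' r c = cnj (?N' c r)" if "r < d" "c < d" for r c
  proof -
    have "cnj (N c r) = N r c" "cnj (N c k) = N k c" "cnj (N k r) = N r k"
      using herm[OF that] herm[OF k that(2)] herm[OF that(1) k] by simp_all
    then show ?thesis using real by (simp add: mult.commute)
  qed
  have "0 \<le> Re (qform d ?N' w)" for w
  proof -
    define \<beta> where "\<beta> = (\<Sum>c<d. N k c * w c)"
    have cb: "(\<Sum>r<d. cnj (w r) * N r k) = cnj \<beta>"
    proof -
      have "(\<Sum>r<d. cnj (w r) * N r k) = (\<Sum>r<d. cnj (N k r * w r))"
      proof (rule sum.cong)
        fix r assume "r \<in> {..<d}"
        then have "N r k = cnj (N k r)" using herm k by blast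
        then show "cnj (w r) * N r k = cnj (N k r * w r)" by (simp add: mult.commute)
      qed simp
      then show ?thesis unfolding \<beta>_def by simp
    qed
    have "qform d ?N' w = qform d N w - (\<Sum>r<d. \<Sum>c<d. cnj (w r) * N r k * (N k c * w c)) / N k k"
      unfolding qform_def by (simp add: algebra_simps sum_subtractf sum_divide_distrib)
    also have "(\<Sum>r<d. \<Sum>c<d. cnj (w r) * N r k * (N k c * w c)) = cnj \<beta> * \<beta>"
      unfolding \<beta>_def cb[symmetric, unfolded \<beta>_def] by (simp add: sum_product)
    finally have e1: "qform d ?N' w = qform d N w - cnj \<beta> * \<beta> / N k k" .
    define s where "s = - \<beta> / N k k"
    have "qform d N (\<lambda>r. w r + s * (if r = k then 1 else 0)) =
      qform d N w + cnj s * \<beta> + s * cnj \<beta> + cnj s * s * N k k"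
      using qform_add_basis[OF k, of N w s] cb \<beta>_def by simp
    also have "\<dots> = qform d ?N' w"
      unfolding e1 s_def using nz real by (simp add: field_simps power2_eq_square)
    finally show ?thesis using P unfolding psd_form_def by metis
  qed
  then show ?thesis unfolding psd_form_def using herm' by blast
qed

text \<open>Symmetric Gaussian elimination: repeated Schur complement steps split off one rank-one
  form per row, so that after k steps the remaining form vanishes on the first k rows and columns.\<close>
lemma psd_form_peel:
  assumes P0: "psd_form d N0"
  shows "k \<le> d \<Longrightarrow> \<exists>N V. psd_form d N \<and> (\<forall>r<d. \<forall>c<d. (r < k \<or> c < k) \<longrightarrow> N r c = 0) \<and>
     (\<forall>r<d. \<forall>c<d. N0 r c = N r c + (\<Sum>i<k. V i r * cnj (V i c)))"
proof (induction k)
  case 0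
  then show ?case using P0 by (intro exI[of _ N0] exI[of _ "\<lambda>i r. 0"]) auto
next
  case (Suc k)
  then obtain N V where P: "psd_form d N" and Z: "\<forall>r<d. \<forall>c<d. (r < k \<or> c < k) \<longrightarrow> N r c = 0"
    and D: "\<forall>r<d. \<forall>c<d. N0 r c = N r c + (\<Sum>i<k. V i r * cnj (V i c))" by auto
  have k: "k < d" using Suc by auto
  have herm: "\<And>r c. r < d \<Longrightarrow> c < d \<Longrightarrow> N r c = cnj (N c r)" using P unfolding psd_form_def by blast
  define \<alpha> where "\<alpha> = Re (N k k)"
  have a_eq: "N k k = complex_of_real \<alpha>" and a_ge: "0 \<le> \<alpha>" using psd_form_diag[OF P k] \<alpha>_def by auto
  show ?case
  proof (cases "\<alpha> = 0")
    case True
    then have row: "\<And>c. c < d \<Longrightarrow> N k c = 0" using psd_form_zero_row[OF P k] a_eq by simp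
    then have "\<And>r. r < d \<Longrightarrow> N r k = 0" using herm k by (metis complex_cnj_zero)
    then have "\<forall>r<d. \<forall>c<d. (r < Suc k \<or> c < Suc k) \<longrightarrow> N r c = 0"
      using Z row by (metis less_Suc_eq)
    moreover have "\<forall>r<d. \<forall>c<d. N0 r c = N r c + (\<Sum>i<Suc k. (V(k := (\<lambda>r. 0))) i r * cnj ((V(k := (\<lambda>r. 0))) i c))"
      using D by simp
    ultimately show ?thesis using P by blast
  next
    case False
    then have apos: "0 < \<alpha>" using a_ge by simp
    then have nz: "N k k \<noteq> 0" using a_eq by simp
    define V' where "V' = V(k := (\<lambda>r. N r k / complex_of_real (sqrt \<alpha>)))"
    define N' where "N' = (\<lambda>r c. N r c - N r k * N k c / N k k)"
    have "psd_form d N'" unfolding N'_def using psd_form_schur_step[OF P k nz] .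
    moreover have "\<forall>r<d. \<forall>c<d. (r < Suc k \<or> c < Suc k) \<longrightarrow> N' r c = 0"
      using Z nz k unfolding N'_def by (auto simp: less_Suc_eq)
    moreover have "\<forall>r<d. \<forall>c<d. N0 r c = N' r c + (\<Sum>i<Suc k. V' i r * cnj (V' i c))"
    proof (intro allI impI)
      fix r c assume rc: "r < d" "c < d"
      have "cnj (N c k) = N k c" using herm[OF k rc(2)] by simp
      then have "V' k r * cnj (V' k c) = N r k * N k c / N k k"
        unfolding V'_def a_eq using apos by (simp add: power2_eq_square flip: of_real_mult)
      then show "N0 r c = N' r c + (\<Sum>i<Suc k. V' i r * cnj (V' i c))"
        using D rc unfolding N'_def V'_def by simp
    qed
    ultimately show ?thesis by blast
  qed
qed

lemma psd_form_gram: "psd_form d N \<Longrightarrow> is_gram d N"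
  using psd_form_peel[of d N d] unfolding is_gram_def by fastforce

lemma cinner_mult_vec_qform:
  "M \<in> carrier_mat d d \<Longrightarrow> cinner (vec d w) (M *\<^sub>v vec d w) = qform d (\<lambda>r c. M $$ (r,c)) w"
  unfolding cinner_def qform_def
  by (simp add: scalar_prod_def sum_distrib_left mult.assoc atLeast0LessThan)

lemma psd_carrier: "psd d M \<Longrightarrow> M \<in> carrier_mat d d"
  unfolding psd_def by simp

lemma psd_imp_psd_form: assumes "psd d M" shows "psd_form d (\<lambda>r c. M $$ (r,c))"
proof -
  have M: "M \<in> carrier_mat d d" and A: "adj M = M" using assms unfolding psd_def by auto
  have h: "M $$ (r,c) = cnj (M $$ (c,r))" if "r < d" "c < d" for r c
  proof -
    have "M $$ (r,c) = adj M $$ (r,c)" using A by simp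
    also have "\<dots> = cnj (M $$ (c,r))" using M that unfolding adj_def by auto
    finally show ?thesis .
  qed
  have "0 \<le> Re (qform d (\<lambda>r c. M $$ (r,c)) w)" for w
    using assms cinner_mult_vec_qform[OF M, of w] unfolding psd_def by (metis vec_carrier)
  then show ?thesis unfolding psd_form_def using h by blast
qed

lemma sum_swap3: "(\<Sum>r\<in>A. \<Sum>c\<in>B. \<Sum>i\<in>C. F r c i) = (\<Sum>i\<in>C. \<Sum>r\<in>A. \<Sum>c\<in>B. F r c i)"
proof -
  have "(\<Sum>r\<in>A. \<Sum>c\<in>B. \<Sum>i\<in>C. F r c i) = (\<Sum>r\<in>A. \<Sum>i\<in>C. \<Sum>c\<in>B. F r c i)"
    by (rule sum.cong[OF refl], rule sum.swap)
  also have "\<dots> = (\<Sum>i\<in>C. \<Sum>r\<in>A. \<Sum>c\<in>B. F r c i)" by (rule sum.swap)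
  finally show ?thesis .
qed

lemma gram_imp_psd:
  assumes Kc: "K \<in> carrier_mat d d" and G: "is_gram d (\<lambda>r c. K $$ (r,c))"
  shows "psd d K"
proof -
  obtain N :: nat and V where V: "\<forall>r<d. \<forall>c<d. K $$ (r,c) = (\<Sum>i<N. V i r * cnj (V i c))"
    using G unfolding is_gram_def by blast
  have adj: "adj K = K"
  proof (rule eq_matI)
    fix i j assume "i < dim_row K" "j < dim_col K"
    then show "adj K $$ (i,j) = K $$ (i,j)" using Kc V unfolding adj_def by (simp add: mult.commute)
  qed (use Kc in \<open>auto simp: adj_def\<close>)
  have "0 \<le> Re (cinner v (K *\<^sub>v v))" if v: "v \<in> carrier_vec d" for v
  proof -
    define w where "w = (\<lambda>i. v $ i)"
    have vw: "v = vec d w" using v unfolding w_def by auto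
    define z where "z = (\<lambda>i. \<Sum>c<d. cnj (V i c) * w c)"
    have "qform d (\<lambda>r c. K $$ (r,c)) w = (\<Sum>r<d. \<Sum>c<d. \<Sum>i<N. cnj (w r) * V i r * (cnj (V i c) * w c))"
      unfolding qform_def using V by (simp add: sum_distrib_left sum_distrib_right mult.assoc)
    also have "\<dots> = (\<Sum>i<N. \<Sum>r<d. \<Sum>c<d. cnj (w r) * V i r * (cnj (V i c) * w c))"
      by (rule sum_swap3)
    also have "\<dots> = (\<Sum>i<N. (\<Sum>r<d. cnj (w r) * V i r) * (\<Sum>c<d. cnj (V i c) * w c))"
      by (simp add: sum_product)
    also have "\<dots> = (\<Sum>i<N. cnj (z i) * z i)"
      unfolding z_def by (simp add: mult.commute)
    finally have "Re (qform d (\<lambda>r c. K $$ (r,c)) w) = (\<Sum>i<N. Re (cnj (z i) * z i))" by simp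
    also have "\<dots> \<ge> 0" by (intro sum_nonneg) (simp add: mult.commute)
    finally show ?thesis using cinner_mult_vec_qform[OF Kc, of w] vw by simp
  qed
  then show ?thesis unfolding psd_def using Kc adj by blast
qed

lemma psd_iff_gram: "psd d M \<longleftrightarrow> M \<in> carrier_mat d d \<and> is_gram d (\<lambda>r c. M $$ (r,c))"
  using gram_imp_psd psd_carrier psd_form_gram psd_imp_psd_form by blast

section \<open>Kronecker products and traces\<close>

lemma sum_divmod: "(\<Sum>l<(a::nat)*b. g (l div b) (l mod b)) = (\<Sum>i<a. \<Sum>j<b. (g i j :: 'c::comm_monoid_add))"
proof -
  have "(\<Sum>i<a. \<Sum>j<b. g i j) = (\<Sum>p\<in>{..<a}\<times>{..<b}. g (fst p) (snd p))"
    by (simp add: sum.cartesian_product split_beta)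
  also have "\<dots> = (\<Sum>l<a*b. g (l div b) (l mod b))"
  proof (rule sum.reindex_bij_witness[where i="\<lambda>l. (l div b, l mod b)" and j="\<lambda>p. fst p * b + snd p"])
    fix p assume p: "p \<in> {..<a} \<times> {..<b}"
    obtain i j where ij: "p = (i,j)" "i < a" "j < b" using p by auto
    have "i * b + j < (i+1) * b" using ij by simp
    also have "\<dots> \<le> a * b" using ij by (intro mult_right_mono) auto
    finally show "fst p * b + snd p \<in> {..<a*b}" using ij by simp
    show "(((fst p * b + snd p) div b), (fst p * b + snd p) mod b) = p" using ij by auto
    show "g ((fst p * b + snd p) div b) ((fst p * b + snd p) mod b) = g (fst p) (snd p)" using ij by auto
  next
    fix l assume l: "l \<in> {..<a*b}"
    then have b: "0 < b" by (cases "b = 0") auto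
    show "fst (l div b, l mod b) * b + snd (l div b, l mod b) = l" by simp
    show "(l div b, l mod b) \<in> {..<a} \<times> {..<b}" using l b by (auto simp: less_mult_imp_div_less)
  qed
  finally show ?thesis by simp
qed

lemma kron_carrier: "A \<in> carrier_mat n1 n1 \<Longrightarrow> B \<in> carrier_mat n2 n2 \<Longrightarrow> kron A B \<in> carrier_mat (n1*n2) (n1*n2)"
  unfolding kron_def by auto

lemma kron_dims[simp]: "dim_row (kron A B) = dim_row A * dim_row B" "dim_col (kron A B) = dim_col A * dim_col B"
  unfolding kron_def by auto

lemma kron_index: assumes "A \<in> carrier_mat n1 n1" "B \<in> carrier_mat n2 n2" "r < n1*n2" "c < n1*n2"
  shows "kron A B $$ (r,c) = A $$ (r div n2, c div n2) * B $$ (r mod n2, c mod n2)"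
  using assms unfolding kron_def by auto

lemma mtrace_mult: assumes "A \<in> carrier_mat n n" "B \<in> carrier_mat n n"
  shows "mtrace (A * B) = (\<Sum>r<n. \<Sum>c<n. A $$ (r,c) * B $$ (c,r))"
  using assms unfolding mtrace_def by (simp add: scalar_prod_def atLeast0LessThan)

lemma mtrace_kron: assumes "A \<in> carrier_mat n1 n1" "B \<in> carrier_mat n2 n2"
  shows "mtrace (kron A B) = mtrace A * mtrace B"
proof -
  have "mtrace (kron A B) = (\<Sum>l<n1*n2. A $$ (l div n2, l div n2) * B $$ (l mod n2, l mod n2))"
    unfolding mtrace_def using assms by (simp add: kron_index)
  also have "\<dots> = (\<Sum>i<n1. \<Sum>j<n2. A $$ (i,i) * B $$ (j,j))" by (rule sum_divmod)
  also have "\<dots> = mtrace A * mtrace B" using assms unfolding mtrace_def by (simp add: sum_product)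
  finally show ?thesis .
qed

lemma mtrace_kron_mult: assumes "A \<in> carrier_mat n1 n1" "B \<in> carrier_mat n2 n2"
  "C \<in> carrier_mat n1 n1" "D \<in> carrier_mat n2 n2"
  shows "mtrace (kron A B * kron C D) = mtrace (A * C) * mtrace (B * D)"
proof -
  have "mtrace (kron A B * kron C D) = (\<Sum>r<n1*n2. \<Sum>c<n1*n2. kron A B $$ (r,c) * kron C D $$ (c,r))"
    using assms by (intro mtrace_mult kron_carrier)
  also have "\<dots> = (\<Sum>r<n1*n2. \<Sum>c<n1*n2. (A $$ (r div n2, c div n2) * B $$ (r mod n2, c mod n2)) *
        (C $$ (c div n2, r div n2) * D $$ (c mod n2, r mod n2)))"
    using assms by (simp add: kron_index)
  also have "\<dots> = (\<Sum>r1<n1. \<Sum>r2<n2. \<Sum>c<n1*n2. (A $$ (r1, c div n2) * B $$ (r2, c mod n2)) *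
        (C $$ (c div n2, r1) * D $$ (c mod n2, r2)))"
    by (rule sum_divmod[where g="\<lambda>i j. \<Sum>c<n1*n2. (A $$ (i, c div n2) * B $$ (j, c mod n2)) *
        (C $$ (c div n2, i) * D $$ (c mod n2, j))"])
  also have "\<dots> = (\<Sum>r1<n1. \<Sum>r2<n2. \<Sum>c1<n1. \<Sum>c2<n2. (A $$ (r1, c1) * B $$ (r2, c2)) *
        (C $$ (c1, r1) * D $$ (c2, r2)))"
    by (subst sum_divmod[where g="\<lambda>i j. (A $$ (_, i) * B $$ (_, j)) * (C $$ (i, _) * D $$ (j, _))"]) simp
  also have "\<dots> = (\<Sum>r1<n1. \<Sum>c1<n1. A $$ (r1, c1) * C $$ (c1, r1)) * (\<Sum>r2<n2. \<Sum>c2<n2. B $$ (r2, c2) * D $$ (c2, r2))"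
    by (simp add: sum_product sum_distrib_left sum_distrib_right algebra_simps sum.swap[of _ "{..<n2}" "{..<n1}"])
  also have "\<dots> = mtrace (A * C) * mtrace (B * D)" using assms by (simp add: mtrace_mult)
  finally show ?thesis .
qed

lemma mtrace_kron_kron_mult:
  assumes A: "A \<in> carrier_mat n1 n1" and B: "B \<in> carrier_mat n2 n2" and C: "C \<in> carrier_mat n3 n3"
    and P: "\<rho> \<in> carrier_mat (n1*n2*n3) (n1*n2*n3)"
  shows "mtrace (kron (kron A B) C * \<rho>) = (\<Sum>r<n1*n2*n3. \<Sum>s<n1*n2*n3.
     A $$ (r div n3 div n2, s div n3 div n2) * B $$ (r div n3 mod n2, s div n3 mod n2) *
     C $$ (r mod n3, s mod n3) * \<rho> $$ (s, r))"
proof -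
  have AB: "kron A B \<in> carrier_mat (n1*n2) (n1*n2)" by (rule kron_carrier[OF A B])
  have ABC: "kron (kron A B) C \<in> carrier_mat (n1*n2*n3) (n1*n2*n3)" by (rule kron_carrier[OF AB C])
  have e: "kron (kron A B) C $$ (r,s) = A $$ (r div n3 div n2, s div n3 div n2) * B $$ (r div n3 mod n2, s div n3 mod n2) *
     C $$ (r mod n3, s mod n3)" if rs: "r < n1*n2*n3" "s < n1*n2*n3" for r s
  proof -
    have n3: "0 < n3" using rs by (cases "n3 = 0") auto
    have "r div n3 < n1*n2" "s div n3 < n1*n2" using rs by (auto simp: less_mult_imp_div_less)
    then show ?thesis using kron_index[OF AB C rs] kron_index[OF A B] by simp
  qed
  show ?thesis unfolding mtrace_mult[OF ABC P] by (rule sum.cong[OF refl], rule sum.cong[OF refl]) (simp add: e)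
qed

lemma kron_one_right: "M \<in> carrier_mat d d \<Longrightarrow> kron M (1\<^sub>m 1) = M"
  by (rule eq_matI) (auto simp: kron_def)

lemma psd_kron:
  assumes A: "psd d1 A" and B: "psd d2 B"
  shows "psd (d1*d2) (kron A B)"
proof -
  have Ac: "A \<in> carrier_mat d1 d1" and Bc: "B \<in> carrier_mat d2 d2" using A B psd_carrier by auto
  obtain K1 :: nat and V1 where V1: "\<forall>r<d1. \<forall>c<d1. A $$ (r,c) = (\<Sum>i<K1. V1 i r * cnj (V1 i c))"
    using A unfolding psd_iff_gram is_gram_def by blast
  obtain K2 :: nat and V2 where V2: "\<forall>r<d2. \<forall>c<d2. B $$ (r,c) = (\<Sum>i<K2. V2 i r * cnj (V2 i c))"
    using B unfolding psd_iff_gram is_gram_def by blast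
  define V where "V = (\<lambda>l r. V1 (l div K2) (r div d2) * V2 (l mod K2) (r mod d2))"
  have "kron A B $$ (r,c) = (\<Sum>l<K1*K2. V l r * cnj (V l c))" if rc: "r < d1*d2" "c < d1*d2" for r c
  proof -
    have d2: "0 < d2" using rc by (cases "d2 = 0") auto
    have r1: "r div d2 < d1" "c div d2 < d1" using rc by (auto simp: less_mult_imp_div_less)
    have r2: "r mod d2 < d2" "c mod d2 < d2" using d2 by auto
    have "kron A B $$ (r,c) = A $$ (r div d2, c div d2) * B $$ (r mod d2, c mod d2)"
      using kron_index[OF Ac Bc rc] .
    also have "\<dots> = (\<Sum>i<K1. V1 i (r div d2) * cnj (V1 i (c div d2))) * (\<Sum>j<K2. V2 j (r mod d2) * cnj (V2 j (c mod d2)))"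
      using V1 V2 r1 r2 by simp
    also have "\<dots> = (\<Sum>i<K1. \<Sum>j<K2. (V1 i (r div d2) * V2 j (r mod d2)) * cnj (V1 i (c div d2) * V2 j (c mod d2)))"
      by (simp add: sum_product algebra_simps)
    also have "\<dots> = (\<Sum>l<K1*K2. V l r * cnj (V l c))"
      unfolding V_def by (rule sum_divmod[symmetric])
    finally show ?thesis .
  qed
  then show ?thesis unfolding psd_iff_gram is_gram_def using kron_carrier[OF Ac Bc] by blast
qed

lemma psd_one: "psd 1 (1\<^sub>m 1)"
  unfolding psd_iff_gram is_gram_def by (intro conjI exI[of _ 1] exI[of _ "\<lambda>i r. 1"]) auto

lemma psd_zero: "psd 1 (0\<^sub>m 1 1)"
  unfolding psd_iff_gram is_gram_def by (intro conjI exI[of _ 0]) auto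

text \<open>Expanding K as a sum of rank-one terms writes tr(K\<rho>) as a sum of values of the Hermitian
  form of \<rho>, hence real and nonnegative.\<close>
lemma mtrace_mult_psd:
  assumes K: "psd d K" and P: "psd d \<rho>"
  shows "mtrace (K * \<rho>) = complex_of_real (Re (mtrace (K * \<rho>)))" and "0 \<le> Re (mtrace (K * \<rho>))"
proof -
  have Kc: "K \<in> carrier_mat d d" and Pc: "\<rho> \<in> carrier_mat d d" using K P psd_carrier by auto
  obtain N :: nat and V where V: "\<forall>r<d. \<forall>c<d. K $$ (r,c) = (\<Sum>i<N. V i r * cnj (V i c))"
    using K unfolding psd_iff_gram is_gram_def by blast
  have herm: "\<forall>r<d. \<forall>c<d. \<rho> $$ (r,c) = cnj (\<rho> $$ (c,r))"
    and nonneg: "\<And>w. 0 \<le> Re (qform d (\<lambda>r c. \<rho> $$ (r,c)) w)"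
    using psd_imp_psd_form[OF P] unfolding psd_form_def by blast+
  have "mtrace (K * \<rho>) = (\<Sum>r<d. \<Sum>c<d. K $$ (r,c) * \<rho> $$ (c,r))" by (rule mtrace_mult[OF Kc Pc])
  also have "\<dots> = (\<Sum>r<d. \<Sum>c<d. \<Sum>i<N. V i r * cnj (V i c) * \<rho> $$ (c,r))"
    using V by (simp add: sum_distrib_right)
  also have "\<dots> = (\<Sum>i<N. \<Sum>r<d. \<Sum>c<d. V i r * cnj (V i c) * \<rho> $$ (c,r))"
    by (rule sum_swap3)
  also have "\<dots> = (\<Sum>i<N. \<Sum>c<d. \<Sum>r<d. V i r * cnj (V i c) * \<rho> $$ (c,r))"
    by (rule sum.cong[OF refl], rule sum.swap)
  also have "\<dots> = (\<Sum>i<N. qform d (\<lambda>r c. \<rho> $$ (r,c)) (V i))"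
    unfolding qform_def by (simp add: mult.commute mult.left_commute)
  finally have tr: "mtrace (K * \<rho>) = (\<Sum>i<N. qform d (\<lambda>r c. \<rho> $$ (r,c)) (V i))" .
  have "cnj (mtrace (K * \<rho>)) = mtrace (K * \<rho>)"
    unfolding tr cnj_sum qform_hermitian_cnj[OF herm] ..
  then have "Im (mtrace (K * \<rho>)) = - Im (mtrace (K * \<rho>))" by (metis cnj.sel(2))
  then show "mtrace (K * \<rho>) = complex_of_real (Re (mtrace (K * \<rho>)))"
    by (simp add: complex_eq_iff)
  show "0 \<le> Re (mtrace (K * \<rho>))" unfolding tr Re_sum using nonneg by (simp add: sum_nonneg)
qed

section \<open>Measurements and winning probabilities\<close>

lemma povm_iff:
  "povm d S P \<longleftrightarrow> (\<forall>a\<in>S. psd d (P a)) \<and>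
     (\<forall>i<d. \<forall>j<d. (\<Sum>a\<in>S. P a $$ (i,j)) = (if i = j then 1 else 0))"
proof -
  have "mat d d (\<lambda>(i,j). \<Sum>a\<in>S. P a $$ (i,j)) = 1\<^sub>m d \<longleftrightarrow>
      (\<forall>i<d. \<forall>j<d. (\<Sum>a\<in>S. P a $$ (i,j)) = (if i = j then 1 else 0))"
  proof
    assume e: "mat d d (\<lambda>(i,j). \<Sum>a\<in>S. P a $$ (i,j)) = 1\<^sub>m d"
    show "\<forall>i<d. \<forall>j<d. (\<Sum>a\<in>S. P a $$ (i,j)) = (if i = j then 1 else 0)"
    proof (intro allI impI)
      fix i j assume "i < d" "j < d"
      then show "(\<Sum>a\<in>S. P a $$ (i,j)) = (if i = j then 1 else 0)"
        using arg_cong[OF e, of "\<lambda>M. M $$ (i,j)"] by simp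
    qed
  next
    assume h: "\<forall>i<d. \<forall>j<d. (\<Sum>a\<in>S. P a $$ (i,j)) = (if i = j then 1 else 0)"
    show "mat d d (\<lambda>(i,j). \<Sum>a\<in>S. P a $$ (i,j)) = 1\<^sub>m d"
    proof (rule eq_matI)
      fix i j assume "i < dim_row (1\<^sub>m d :: complex mat)" "j < dim_col (1\<^sub>m d :: complex mat)"
      then show "mat d d (\<lambda>(i,j). \<Sum>a\<in>S. P a $$ (i,j)) $$ (i,j) = 1\<^sub>m d $$ (i,j)" using h by simp
    qed simp_all
  qed
  then show ?thesis unfolding povm_def by blast
qed

lemma povm_psd: "povm d S P \<Longrightarrow> a \<in> S \<Longrightarrow> psd d (P a)"
  by (simp add: povm_iff)

lemma povm_carrier: "povm d S P \<Longrightarrow> a \<in> S \<Longrightarrow> P a \<in> carrier_mat d d"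
  by (rule psd_carrier[OF povm_psd])

lemma sum_distrib3:
  "(\<Sum>c\<in>C. \<Sum>b\<in>B. \<Sum>a\<in>A. \<Sum>r\<in>R. \<Sum>s\<in>S'. f a r s * (g b r s * (h c r s * (k r s :: complex)))) =
   (\<Sum>r\<in>R. \<Sum>s\<in>S'. (\<Sum>a\<in>A. f a r s) * (\<Sum>b\<in>B. g b r s) * (\<Sum>c\<in>C. h c r s) * k r s)"
proof -
  have "(\<Sum>r\<in>R. \<Sum>s\<in>S'. (\<Sum>a\<in>A. f a r s) * (\<Sum>b\<in>B. g b r s) * (\<Sum>c\<in>C. h c r s) * k r s) =
     (\<Sum>r\<in>R. \<Sum>s\<in>S'. \<Sum>c\<in>C. \<Sum>b\<in>B. \<Sum>a\<in>A. f a r s * (g b r s * (h c r s * k r s)))"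
    by (simp add: sum_distrib_left sum_distrib_right mult.assoc)
  also have "\<dots> = (\<Sum>c\<in>C. \<Sum>r\<in>R. \<Sum>s\<in>S'. \<Sum>b\<in>B. \<Sum>a\<in>A. f a r s * (g b r s * (h c r s * k r s)))"
    by (rule sum_swap3)
  also have "\<dots> = (\<Sum>c\<in>C. \<Sum>b\<in>B. \<Sum>r\<in>R. \<Sum>s\<in>S'. \<Sum>a\<in>A. f a r s * (g b r s * (h c r s * k r s)))"
    by (rule sum.cong[OF refl], rule sum_swap3)
  also have "\<dots> = (\<Sum>c\<in>C. \<Sum>b\<in>B. \<Sum>a\<in>A. \<Sum>r\<in>R. \<Sum>s\<in>S'. f a r s * (g b r s * (h c r s * k r s)))"
    by (rule sum.cong[OF refl], rule sum.cong[OF refl], rule sum_swap3)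
  finally show ?thesis by simp
qed

text \<open>Letting referee, Alice and Bob answer independently, the three completeness relations collapse
  the triple sum to the trace of the state.\<close>
lemma mtrace_povm_kron_sum:
  assumes R: "povm M S R" and PA: "povm dA S PA" and PB: "povm dB S PB"
    and rc: "\<rho> \<in> carrier_mat (M*dA*dB) (M*dA*dB)"
  shows "(\<Sum>c\<in>S. \<Sum>b\<in>S. \<Sum>a\<in>S. mtrace (kron (kron (R a) (PA b)) (PB c) * \<rho>)) = mtrace \<rho>"
proof -
  let ?N = "M*dA*dB"
  have "(\<Sum>c\<in>S. \<Sum>b\<in>S. \<Sum>a\<in>S. mtrace (kron (kron (R a) (PA b)) (PB c) * \<rho>)) =
      (\<Sum>c\<in>S. \<Sum>b\<in>S. \<Sum>a\<in>S. \<Sum>r<?N. \<Sum>s<?N. R a $$ (r div dB div dA, s div dB div dA) *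
         (PA b $$ (r div dB mod dA, s div dB mod dA) * (PB c $$ (r mod dB, s mod dB) * \<rho> $$ (s, r))))"
    using povm_carrier[OF R] povm_carrier[OF PA] povm_carrier[OF PB]
    by (intro sum.cong refl, subst mtrace_kron_kron_mult[OF _ _ _ rc]) (auto simp: mult.assoc)
  also have "\<dots> = (\<Sum>r<?N. \<Sum>s<?N. (\<Sum>a\<in>S. R a $$ (r div dB div dA, s div dB div dA)) *
         (\<Sum>b\<in>S. PA b $$ (r div dB mod dA, s div dB mod dA)) * (\<Sum>c\<in>S. PB c $$ (r mod dB, s mod dB)) * \<rho> $$ (s, r))"
    by (rule sum_distrib3)
  also have "\<dots> = (\<Sum>r<?N. \<Sum>s<?N. (if r = s then \<rho> $$ (s, r) else 0))"
  proof (intro sum.cong refl)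
    fix r s assume rs: "r \<in> {..<?N}" "s \<in> {..<?N}"
    have dB: "0 < dB" and dA: "0 < dA" using rs by (cases "dB = 0"; cases "dA = 0"; auto)+
    have "r div dB < M*dA" "s div dB < M*dA" using rs by (auto simp: less_mult_imp_div_less)
    then have "r div dB div dA < M" "s div dB div dA < M" by (auto simp: less_mult_imp_div_less)
    moreover have "r div dB mod dA < dA" "s div dB mod dA < dA" "r mod dB < dB" "s mod dB < dB"
      using dA dB by auto
    moreover have "(r div dB div dA = s div dB div dA \<and> r div dB mod dA = s div dB mod dA \<and> r mod dB = s mod dB)
        \<longleftrightarrow> r = s"
      by (metis div_mult_mod_eq)
    ultimately show "(\<Sum>a\<in>S. R a $$ (r div dB div dA, s div dB div dA)) *
         (\<Sum>b\<in>S. PA b $$ (r div dB mod dA, s div dB mod dA)) * (\<Sum>c\<in>S. PB c $$ (r mod dB, s mod dB)) * \<rho> $$ (s, r)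
         = (if r = s then \<rho> $$ (s, r) else 0)"
      using R PA PB unfolding povm_iff by auto
  qed
  also have "\<dots> = mtrace \<rho>" unfolding mtrace_def using rc by simp
  finally show ?thesis .
qed

text \<open>The winning terms are the diagonal part of the nonnegative triple sum above.\<close>
lemma povm_round_le_1:
  assumes fS: "finite S" and R: "povm M S R" and PA: "povm dA S PA" and PB: "povm dB S PB"
    and D: "density (M*dA*dB) \<rho>"
  shows "(\<Sum>a\<in>S. Re (mtrace (kron (kron (R a) (PA a)) (PB a) * \<rho>))) \<le> 1"
proof -
  have rp: "psd (M*dA*dB) \<rho>" and tr: "mtrace \<rho> = 1" using D unfolding density_def by auto
  define T where "T a b c = Re (mtrace (kron (kron (R a) (PA b)) (PB c) * \<rho>))" for a b c
  have Tnn: "0 \<le> T a b c" if "a \<in> S" "b \<in> S" "c \<in> S" for a b c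
    unfolding T_def using that povm_psd[OF R] povm_psd[OF PA] povm_psd[OF PB]
    by (intro mtrace_mult_psd(2)[OF _ rp] psd_kron) auto
  have "(\<Sum>a\<in>S. T a a a) \<le> (\<Sum>a\<in>S. \<Sum>b\<in>S. \<Sum>c\<in>S. T a b c)"
  proof (rule sum_mono)
    fix a assume a: "a \<in> S"
    have "T a a a \<le> (\<Sum>c\<in>S. T a a c)" using a Tnn fS by (intro member_le_sum) auto
    also have "\<dots> \<le> (\<Sum>b\<in>S. \<Sum>c\<in>S. T a b c)"
      using a Tnn fS by (intro member_le_sum[where f="\<lambda>b. \<Sum>c\<in>S. T a b c"] sum_nonneg) auto
    finally show "T a a a \<le> (\<Sum>b\<in>S. \<Sum>c\<in>S. T a b c)" .
  qed
  also have "\<dots> = (\<Sum>c\<in>S. \<Sum>b\<in>S. \<Sum>a\<in>S. T a b c)"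
    by (subst sum_swap3) (rule sum.cong[OF refl], rule sum.swap)
  also have "\<dots> = 1"
    using mtrace_povm_kron_sum[OF R PA PB psd_carrier[OF rp]] tr unfolding T_def
    by (simp flip: Re_sum)
  finally show ?thesis unfolding T_def .
qed

lemma win_prob_le_1:
  assumes G: "moe_game Q pd Ans m R" and st: "strategy Q Ans m dA dB \<rho> PA PB"
  shows "win_prob Q pd Ans R \<rho> PA PB \<le> 1"
proof -
  have "win_prob Q pd Ans R \<rho> PA PB \<le> (\<Sum>x\<in>Q. pd x * 1)"
    unfolding win_prob_def
  proof (rule sum_mono)
    fix x assume x: "x \<in> Q"
    have "(\<Sum>a\<in>Ans. Re (mtrace (kron (kron (R a x) (PA x a)) (PB x a) * \<rho>))) \<le> 1"
      using G st x unfolding moe_game_def strategy_def by (intro povm_round_le_1) auto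
    then show "pd x * (\<Sum>a\<in>Ans. Re (mtrace (kron (kron (R a x) (PA x a)) (PB x a) * \<rho>))) \<le> pd x * 1"
      using G x unfolding moe_game_def by (intro mult_left_mono) auto
  qed
  then show ?thesis using G unfolding moe_game_def by simp
qed

section \<open>Unentangled strategies with deterministic answers\<close>

text \<open>Vectors of C^m are functions on indices, of which only the values below m matter.\<close>

definition sqnorm :: "nat \<Rightarrow> (nat \<Rightarrow> complex) \<Rightarrow> real" where
  "sqnorm m v = (\<Sum>i<m. (cmod (v i))\<^sup>2)"

definition outer :: "nat \<Rightarrow> (nat \<Rightarrow> complex) \<Rightarrow> complex mat" where
  "outer m \<psi> = mat m m (\<lambda>(i,j). \<psi> i * cnj (\<psi> j))"

lemma sqnorm_basis: "k < m \<Longrightarrow> sqnorm m (\<lambda>i. if i = k then 1 else 0) = 1"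
proof -
  assume k: "k < m"
  have "sqnorm m (\<lambda>i. if i = k then 1 else 0) = (\<Sum>i<m. if i = k then 1 else 0)"
    unfolding sqnorm_def by (rule sum.cong) auto
  then show ?thesis using k by simp
qed

lemma psd_outer: "psd m (outer m \<psi>)"
  unfolding psd_iff_gram is_gram_def outer_def by (intro conjI exI[of _ 1] exI[of _ "\<lambda>i. \<psi>"]) auto

lemma mtrace_outer: "mtrace (outer m \<psi>) = complex_of_real (sqnorm m \<psi>)"
proof -
  have "complex_of_real (sqnorm m \<psi>) = (\<Sum>i<m. complex_of_real ((cmod (\<psi> i))\<^sup>2))"
    unfolding sqnorm_def by (rule of_real_sum)
  also have "\<dots> = mtrace (outer m \<psi>)"
    unfolding mtrace_def outer_def by (simp only: complex_norm_square) simp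
  finally show ?thesis by simp
qed

lemma density_outer: "sqnorm m \<psi> = 1 \<Longrightarrow> density m (outer m \<psi>)"
  unfolding density_def using psd_outer mtrace_outer by simp

lemma mtrace_mult_outer:
  "M \<in> carrier_mat m m \<Longrightarrow> mtrace (M * outer m \<psi>) = qform m (\<lambda>r c. M $$ (r,c)) \<psi>"
  unfolding qform_def
  by (subst mtrace_mult[where n=m]) (auto simp: outer_def algebra_simps intro!: sum.cong)

definition det_povm :: "('q \<Rightarrow> 'a) \<Rightarrow> 'q \<Rightarrow> 'a \<Rightarrow> complex mat" where
  "det_povm f x a = (if a = f x then 1\<^sub>m 1 else 0\<^sub>m 1 1)"

lemma povm_det_povm:
  assumes "finite S" "f x \<in> S"
  shows "povm 1 S (det_povm f x)"
proof -
  have "(\<Sum>a\<in>S. det_povm f x a $$ (0,0)) = (\<Sum>a\<in>S. if a = f x then 1 else 0)"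
    unfolding det_povm_def by (rule sum.cong) auto
  then have "(\<Sum>a\<in>S. det_povm f x a $$ (0,0)) = 1" using assms by simp
  then show ?thesis unfolding povm_iff det_povm_def using psd_one psd_zero by auto
qed

lemma density_one: "density 1 (1\<^sub>m 1)"
  unfolding density_def using psd_one by (simp add: mtrace_def)

lemma kron_zero_right: "kron M (0\<^sub>m 1 1) = 0\<^sub>m (dim_row M) (dim_col M)"
  by (rule eq_matI) (auto simp: kron_def)

lemma fully_separable_1_1: "density d \<rho> \<Longrightarrow> fully_separable d 1 1 \<rho>"
proof -
  assume \<rho>: "density d \<rho>"
  then have \<rho>c: "\<rho> \<in> carrier_mat d d" unfolding density_def using psd_carrier by blast
  have "\<rho> = mat (d*1*1) (d*1*1) (\<lambda>(r,c). \<Sum>i<(1::nat). complex_of_real 1 * kron (kron \<rho> (1\<^sub>m 1)) (1\<^sub>m 1) $$ (r,c))"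
    using kron_one_right[OF \<rho>c] \<rho>c by (intro eq_matI) auto
  then show ?thesis unfolding fully_separable_def using \<rho> density_one
    by (intro exI[of _ "1::nat"] exI[of _ "\<lambda>_. 1::real"] exI[of _ "\<lambda>_. \<rho>"] exI[of _ "\<lambda>_. 1\<^sub>m 1"] conjI) auto
qed

lemma strategy_det_povm:
  assumes "finite Ans" "\<forall>x\<in>Q. f x \<in> Ans" "density m \<sigma>"
  shows "strategy Q Ans m 1 1 \<sigma> (det_povm f) (det_povm f)"
proof -
  have "\<forall>x\<in>Q. povm 1 Ans (det_povm f x)"
  proof
    fix x assume "x \<in> Q"
    then have "f x \<in> Ans" using assms(2) by simp
    then show "povm 1 Ans (det_povm f x)" by (rule povm_det_povm[OF assms(1)])
  qed
  then show ?thesis unfolding strategy_def using assms(3) by simp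
qed

lemma win_prob_det_povm:
  assumes f: "\<forall>x\<in>Q. f x \<in> Ans" and fA: "finite Ans"
    and Rc: "\<forall>x\<in>Q. \<forall>a\<in>Ans. R a x \<in> carrier_mat m m" and \<sigma>: "\<sigma> \<in> carrier_mat m m"
  shows "win_prob Q pd Ans R \<sigma> (det_povm f) (det_povm f) = (\<Sum>x\<in>Q. pd x * Re (mtrace (R (f x) x * \<sigma>)))"
  unfolding win_prob_def
proof (intro sum.cong refl arg_cong2[where f="(*)"])
  fix x assume x: "x \<in> Q"
  have "Re (mtrace (kron (kron (R a x) (det_povm f x a)) (det_povm f x a) * \<sigma>)) =
      (if a = f x then Re (mtrace (R a x * \<sigma>)) else 0)" if a: "a \<in> Ans" for a
  proof -
    have c: "R a x \<in> carrier_mat m m" using Rc x a by blast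
    have "kron (kron (R a x) (det_povm f x a)) (det_povm f x a) = (if a = f x then R a x else 0\<^sub>m m m)"
    proof (cases "a = f x")
      case True
      then show ?thesis unfolding det_povm_def using kron_one_right[OF c] by simp
    next
      case False
      then show ?thesis unfolding det_povm_def
        using kron_zero_right[of "R a x"] kron_zero_right[of "0\<^sub>m m m"] c by simp
    qed
    then show ?thesis using \<sigma> by (simp add: mtrace_def)
  qed
  then have "(\<Sum>a\<in>Ans. Re (mtrace (kron (kron (R a x) (det_povm f x a)) (det_povm f x a) * \<sigma>))) =
      (\<Sum>a\<in>Ans. if a = f x then Re (mtrace (R a x * \<sigma>)) else 0)"
    by (rule sum.cong[OF refl])
  then show "(\<Sum>a\<in>Ans. Re (mtrace (kron (kron (R a x) (det_povm f x a)) (det_povm f x a) * \<sigma>))) =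
      Re (mtrace (R (f x) x * \<sigma>))"
    using f x fA by simp
qed

lemma win_prob_le_uvalue:
  assumes G: "moe_game Q pd Ans m R"
    and st: "strategy Q Ans m dA dB \<rho> PA PB" and sep: "fully_separable m dA dB \<rho>"
  shows "win_prob Q pd Ans R \<rho> PA PB \<le> uvalue Q pd Ans m R"
  unfolding uvalue_def
proof (rule cSup_upper)
  show "win_prob Q pd Ans R \<rho> PA PB \<in> {win_prob Q pd Ans R \<rho> PA PB | dA dB \<rho> PA PB.
      strategy Q Ans m dA dB \<rho> PA PB \<and> fully_separable m dA dB \<rho>}"
    using st sep by blast
  show "bdd_above {win_prob Q pd Ans R \<rho> PA PB | dA dB \<rho> PA PB.
      strategy Q Ans m dA dB \<rho> PA PB \<and> fully_separable m dA dB \<rho>}"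
    using win_prob_le_1[OF G] by (auto intro!: bdd_aboveI[of _ 1])
qed

lemma det_value_le_uvalue:
  assumes G: "moe_game Q pd Ans m R" and f: "\<forall>x\<in>Q. f x \<in> Ans" and \<sigma>: "density m \<sigma>"
  shows "(\<Sum>x\<in>Q. pd x * Re (mtrace (R (f x) x * \<sigma>))) \<le> uvalue Q pd Ans m R"
proof -
  have fA: "finite Ans" and pv: "\<forall>x\<in>Q. povm m Ans (\<lambda>a. R a x)"
    using G unfolding moe_game_def by auto
  have Rc: "\<forall>x\<in>Q. \<forall>a\<in>Ans. R a x \<in> carrier_mat m m"
    using povm_carrier pv by fastforce
  have "\<sigma> \<in> carrier_mat m m" using \<sigma> psd_carrier unfolding density_def by blast
  then show ?thesis
    using win_prob_le_uvalue[OF G strategy_det_povm[OF fA f \<sigma>] fully_separable_1_1[OF \<sigma>]]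
      win_prob_det_povm[OF f fA Rc] by simp
qed

lemma uvalue_le_qvalue:
  assumes G: "moe_game Q pd Ans m R"
  shows "uvalue Q pd Ans m R \<le> qvalue Q pd Ans m R"
  unfolding uvalue_def qvalue_def
proof (rule cSup_subset_mono)
  obtain a where a: "a \<in> Ans" and fA: "finite Ans" and m: "0 < m" using G unfolding moe_game_def by auto
  have "density m (outer m (\<lambda>i. if i = 0 then 1 else 0))" by (rule density_outer[OF sqnorm_basis[OF m]])
  then show "{win_prob Q pd Ans R \<rho> PA PB | dA dB \<rho> PA PB.
      strategy Q Ans m dA dB \<rho> PA PB \<and> fully_separable m dA dB \<rho>} \<noteq> {}"
    using strategy_det_povm[OF fA, of Q "\<lambda>_. a"] fully_separable_1_1 a by blast
  show "bdd_above {win_prob Q pd Ans R \<rho> PA PB | dA dB \<rho> PA PB. strategy Q Ans m dA dB \<rho> PA PB}"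
    using win_prob_le_1[OF G] by (auto intro!: bdd_aboveI[of _ 1])
qed blast

section \<open>Parallel repetition\<close>

lemma rep_R_Nil [simp]: "rep_R R [] [] = 1\<^sub>m 1"
  unfolding rep_R_def by simp

lemma rep_R_Cons [simp]: "rep_R R (a # as) (x # xs) = kron (R a x) (rep_R R as xs)"
  unfolding rep_R_def by simp

lemma rep_set_0 [simp]: "rep_set 0 S = {[]}"
  unfolding rep_set_def by auto

lemma Cons_in_rep_set_Suc [simp]: "x # xs \<in> rep_set (Suc n) S \<longleftrightarrow> x \<in> S \<and> xs \<in> rep_set n S"
  unfolding rep_set_def by auto

lemma rep_set_SucE:
  assumes "xs \<in> rep_set (Suc n) S"
  obtains y ys where "xs = y # ys" "y \<in> S" "ys \<in> rep_set n S"
  using assms unfolding rep_set_def by (cases xs) auto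

lemma rep_set_Suc: "rep_set (Suc n) S = (\<lambda>p. fst p # snd p) ` (S \<times> rep_set n S)"
proof
  show "rep_set (Suc n) S \<subseteq> (\<lambda>p. fst p # snd p) ` (S \<times> rep_set n S)"
  proof
    fix xs assume "xs \<in> rep_set (Suc n) S"
    then obtain y ys where "xs = y # ys" "y \<in> S" "ys \<in> rep_set n S" by (rule rep_set_SucE)
    then show "xs \<in> (\<lambda>p. fst p # snd p) ` (S \<times> rep_set n S)" by force
  qed
qed auto

lemma finite_rep_set: "finite S \<Longrightarrow> finite (rep_set n S)"
  by (induction n) (auto simp: rep_set_Suc)

lemma sum_rep_set_Suc: "(\<Sum>xs\<in>rep_set (Suc n) S. F xs) = (\<Sum>x\<in>S. \<Sum>xs\<in>rep_set n S. F (x # xs))"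
proof -
  have "inj_on (\<lambda>p. fst p # snd p) (S \<times> rep_set n S)" by (auto simp: inj_on_def)
  then show ?thesis unfolding rep_set_Suc by (simp add: sum.reindex sum.cartesian_product split_beta)
qed

lemma sum_rep_set_prod_list: "(\<Sum>xs\<in>rep_set n S. prod_list (map (h :: _ \<Rightarrow> 'r::comm_semiring_1) xs)) = (\<Sum>x\<in>S. h x) ^ n"
proof (induction n)
  case (Suc n)
  have "(\<Sum>xs\<in>rep_set (Suc n) S. prod_list (map h xs)) = (\<Sum>x\<in>S. h x * (\<Sum>xs\<in>rep_set n S. prod_list (map h xs)))"
    by (simp add: sum_rep_set_Suc sum_distrib_left)
  then show ?case by (simp add: Suc sum_distrib_right[symmetric])
qed simp

lemma povm_rep_R:
  assumes P: "\<forall>x\<in>Q. povm m S (\<lambda>a. R a x)"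
  shows "xs \<in> rep_set n Q \<Longrightarrow> povm (m^n) (rep_set n S) (\<lambda>as. rep_R R as xs)"
proof (induction n arbitrary: xs)
  case 0
  then show ?case using psd_one unfolding povm_iff by simp
next
  case (Suc n)
  then obtain x xs' where xs: "xs = x # xs'" "x \<in> Q" "xs' \<in> rep_set n Q" by (auto elim: rep_set_SucE)
  have Px: "povm m S (\<lambda>a. R a x)" and IH: "povm (m^n) (rep_set n S) (\<lambda>as. rep_R R as xs')"
    using P xs Suc.IH by auto
  have "psd (m^Suc n) (rep_R R as xs)" if "as \<in> rep_set (Suc n) S" for as
    using that xs(1) povm_psd[OF Px] povm_psd[OF IH] psd_kron by (auto elim!: rep_set_SucE)
  moreover have "(\<Sum>as\<in>rep_set (Suc n) S. rep_R R as xs $$ (i,j)) = (if i = j then 1 else 0)"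
    if ij: "i < m^Suc n" "j < m^Suc n" for i j
  proof -
    have ij': "i < m * m^n" "j < m * m^n" using ij by auto
    have mn: "0 < m^n" using ij by (cases "m^n = 0") auto
    have d1: "i div m^n < m" "j div m^n < m" using ij' by (auto simp: less_mult_imp_div_less mult.commute)
    have d2: "i mod m^n < m^n" "j mod m^n < m^n" using mn by auto
    have "(\<Sum>as\<in>rep_set (Suc n) S. rep_R R as xs $$ (i,j)) =
        (\<Sum>a\<in>S. \<Sum>as'\<in>rep_set n S. R a x $$ (i div m^n, j div m^n) * rep_R R as' xs' $$ (i mod m^n, j mod m^n))"
      unfolding sum_rep_set_Suc xs(1) rep_R_Cons
      using kron_index[OF povm_carrier[OF Px] povm_carrier[OF IH] ij'] by simp
    also have "\<dots> = (\<Sum>a\<in>S. R a x $$ (i div m^n, j div m^n)) *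
        (\<Sum>as'\<in>rep_set n S. rep_R R as' xs' $$ (i mod m^n, j mod m^n))"
      by (simp add: sum_product)
    also have "\<dots> = (if i div m^n = j div m^n \<and> i mod m^n = j mod m^n then 1 else 0)"
      using Px IH d1 d2 unfolding povm_iff by simp
    also have "\<dots> = (if i = j then 1 else 0)" by (metis div_mult_mod_eq)
    finally show ?thesis .
  qed
  ultimately show ?case unfolding povm_iff by blast
qed

lemma moe_game_rep:
  assumes G: "moe_game Q pd Ans m R"
  shows "moe_game (rep_set n Q) (rep_pi pd) (rep_set n Ans) (m^n) (rep_R R)"
proof -
  obtain x a where "x \<in> Q" "a \<in> Ans" using G unfolding moe_game_def by auto
  then have "replicate n x \<in> rep_set n Q" "replicate n a \<in> rep_set n Ans" unfolding rep_set_def by auto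
  moreover have "0 \<le> rep_pi pd xs" if "xs \<in> rep_set n Q" for xs
    using G that unfolding moe_game_def rep_pi_def rep_set_def by (intro prod_list_nonneg) auto
  moreover have "sum (rep_pi pd) (rep_set n Q) = 1"
    using G unfolding rep_pi_def sum_rep_set_prod_list moe_game_def by simp
  moreover have "\<forall>xs\<in>rep_set n Q. povm (m^n) (rep_set n Ans) (\<lambda>as. rep_R R as xs)"
    using povm_rep_R[of Q m Ans R] G unfolding moe_game_def by simp
  ultimately show ?thesis using G unfolding moe_game_def by (auto simp: finite_rep_set)
qed

primrec kron_pow :: "complex mat \<Rightarrow> nat \<Rightarrow> complex mat" where
  "kron_pow \<sigma> 0 = 1\<^sub>m 1"
| "kron_pow \<sigma> (Suc k) = kron \<sigma> (kron_pow \<sigma> k)"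

lemma density_kron_pow: "density m \<sigma> \<Longrightarrow> density (m^k) (kron_pow \<sigma> k)"
proof (induction k)
  case 0
  then show ?case using density_one by simp
next
  case (Suc k)
  then show ?case
    using psd_carrier[of m \<sigma>] psd_carrier[of "m^k" "kron_pow \<sigma> k"] mtrace_kron psd_kron
    unfolding density_def by auto
qed

lemma mtrace_rep_R_kron_pow:
  assumes "\<forall>x\<in>set xs. R (f x) x \<in> carrier_mat m m" and \<sigma>: "\<sigma> \<in> carrier_mat m m"
  shows "mtrace (rep_R R (map f xs) xs * kron_pow \<sigma> (length xs)) = (\<Prod>x\<leftarrow>xs. mtrace (R (f x) x * \<sigma>))"
  using assms(1)
proof (induction xs)
  case Nil
  then show ?case by (simp add: mtrace_def)
next
  case (Cons x xs)
  have Rx: "R (f x) x \<in> carrier_mat m m" using Cons.prems by simp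
  have "rep_R R (map f xs) xs \<in> carrier_mat (m^length xs) (m^length xs)"
    using Cons.prems by (induction xs) (auto intro: kron_carrier)
  moreover have "kron_pow \<sigma> (length xs) \<in> carrier_mat (m^length xs) (m^length xs)"
    using \<sigma> by (induction xs) (auto intro: kron_carrier)
  ultimately show ?case using Cons mtrace_kron_mult[OF Rx _ \<sigma>] by simp
qed

text \<open>Witness: the state \<sigma>^\<otimes>n, with Alice and Bob both answering f coordinatewise.\<close>
lemma det_value_pow_le_uvalue_rep:
  assumes G: "moe_game Q pd Ans m R" and f: "\<forall>x\<in>Q. f x \<in> Ans" and \<sigma>: "density m \<sigma>"
  shows "(\<Sum>x\<in>Q. pd x * Re (mtrace (R (f x) x * \<sigma>))) ^ n
    \<le> uvalue (rep_set n Q) (rep_pi pd) (rep_set n Ans) (m^n) (rep_R R)"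
proof -
  define t where "t x = Re (mtrace (R (f x) x * \<sigma>))" for x
  have \<sigma>p: "psd m \<sigma>" using \<sigma> unfolding density_def by blast
  have Rp: "psd m (R (f x) x)" if "x \<in> Q" for x
  proof -
    have "povm m Ans (\<lambda>a. R a x)" "f x \<in> Ans" using G f that unfolding moe_game_def by auto
    from povm_psd[OF this] show ?thesis by simp
  qed
  have "rep_pi pd xs * Re (mtrace (rep_R R (map f xs) xs * kron_pow \<sigma> n)) = (\<Prod>x\<leftarrow>xs. pd x * t x)"
    if xs: "xs \<in> rep_set n Q" for xs
  proof -
    have Q: "set xs \<subseteq> Q" and n: "length xs = n" using xs unfolding rep_set_def by auto
    then have "mtrace (rep_R R (map f xs) xs * kron_pow \<sigma> n) = (\<Prod>x\<leftarrow>xs. mtrace (R (f x) x * \<sigma>))"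
      using mtrace_rep_R_kron_pow[of xs R f m \<sigma>] psd_carrier[OF \<sigma>p] Rp psd_carrier by blast
    also have "\<dots> = (\<Prod>x\<leftarrow>xs. complex_of_real (t x))"
      using Q mtrace_mult_psd(1)[OF Rp \<sigma>p] unfolding t_def
      by (intro arg_cong[where f=prod_list] map_cong) auto
    also have "\<dots> = complex_of_real (\<Prod>x\<leftarrow>xs. t x)" by (induction xs) auto
    finally have "Re (mtrace (rep_R R (map f xs) xs * kron_pow \<sigma> n)) = (\<Prod>x\<leftarrow>xs. t x)" by simp
    moreover have "(\<Prod>x\<leftarrow>xs. pd x) * (\<Prod>x\<leftarrow>xs. t x) = (\<Prod>x\<leftarrow>xs. pd x * t x)"
      by (induction xs) (simp_all add: algebra_simps)
    ultimately show ?thesis unfolding rep_pi_def by simp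
  qed
  then have "(\<Sum>xs\<in>rep_set n Q. rep_pi pd xs * Re (mtrace (rep_R R (map f xs) xs * kron_pow \<sigma> n)))
      = (\<Sum>x\<in>Q. pd x * t x) ^ n"
    by (simp add: sum_rep_set_prod_list)
  moreover have "\<forall>xs\<in>rep_set n Q. map f xs \<in> rep_set n Ans" using f unfolding rep_set_def by auto
  ultimately show ?thesis
    using det_value_le_uvalue[OF moe_game_rep[OF G, of n] _ density_kron_pow[OF \<sigma>, of n], where f="map f"]
    unfolding t_def by simp
qed

section \<open>Orthogonal projections\<close>

definition ip :: "nat \<Rightarrow> (nat \<Rightarrow> complex) \<Rightarrow> (nat \<Rightarrow> complex) \<Rightarrow> complex" where
  "ip m u v = (\<Sum>i<m. cnj (u i) * v i)"

definition act :: "nat \<Rightarrow> complex mat \<Rightarrow> (nat \<Rightarrow> complex) \<Rightarrow> (nat \<Rightarrow> complex)" where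
  "act m P v = (\<lambda>i. \<Sum>c<m. P $$ (i,c) * v c)"

lemma cnj_mult_self: "cnj z * z = complex_of_real ((cmod z)^2)"
  using complex_norm_square[of z] by (simp add: mult.commute)

lemma ip_self: "ip m v v = complex_of_real (sqnorm m v)"
  unfolding ip_def sqnorm_def by (simp add: cnj_mult_self)

lemma sqnorm_nonneg: "0 \<le> sqnorm m v" unfolding sqnorm_def by (simp add: sum_nonneg)

lemma sqnorm_zero: assumes "sqnorm m v = 0" "i < m" shows "v i = 0"
proof -
  have "\<forall>j\<in>{..<m}. (cmod (v j))^2 = 0" using assms(1) unfolding sqnorm_def
    by (subst sum_nonneg_eq_0_iff[symmetric]) auto
  then show ?thesis using assms(2) by auto
qed

lemma ip_cong: "(\<And>i. i < m \<Longrightarrow> u i = u' i) \<Longrightarrow> (\<And>i. i < m \<Longrightarrow> v i = v' i) \<Longrightarrow> ip m u v = ip m u' v'"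
  unfolding ip_def by (rule sum.cong) auto

lemma sqnorm_cong: "(\<And>i. i < m \<Longrightarrow> u i = u' i) \<Longrightarrow> sqnorm m u = sqnorm m u'"
  unfolding sqnorm_def by (rule sum.cong) auto

lemma ip_swap: "ip m v u = cnj (ip m u v)"
  unfolding ip_def by (simp add: mult.commute)

lemma ip_add_right: "ip m u (\<lambda>i. v i + w i) = ip m u v + ip m u w"
  unfolding ip_def by (simp add: algebra_simps sum.distrib)

lemma ip_add_left: "ip m (\<lambda>i. u i + v i) w = ip m u w + ip m v w"
  unfolding ip_def by (simp add: algebra_simps sum.distrib)

lemma ip_scale_right: "ip m u (\<lambda>i. c * v i) = c * ip m u v"
  unfolding ip_def by (simp add: algebra_simps sum_distrib_left)

lemma sqnorm_eq_Re_ip: "sqnorm m v = Re (ip m v v)" by (simp add: ip_self)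

lemma sqnorm_add: "sqnorm m (\<lambda>i. u i + v i) = sqnorm m u + sqnorm m v + 2 * Re (ip m u v)"
proof -
  have "ip m (\<lambda>i. u i + v i) (\<lambda>i. u i + v i) = ip m u u + ip m v v + (ip m u v + ip m v u)"
    by (simp add: ip_add_left ip_add_right)
  moreover have "Re (ip m u v + ip m v u) = 2 * Re (ip m u v)" by (simp add: ip_swap[of m v u])
  ultimately show ?thesis unfolding sqnorm_eq_Re_ip by simp
qed

lemma sqnorm_scale: "sqnorm m (\<lambda>i. c * v i) = (cmod c)^2 * sqnorm m v"
  unfolding sqnorm_def by (simp add: norm_mult power_mult_distrib sum_distrib_left)

lemma qform_act: "qform m (\<lambda>r c. P $$ (r,c)) v = ip m v (act m P v)"
  unfolding qform_def ip_def act_def by (simp add: sum_distrib_left mult.assoc)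

lemma act_add: "act m P (\<lambda>i. u i + v i) = (\<lambda>i. act m P u i + act m P v i)"
  unfolding act_def by (simp add: algebra_simps sum.distrib)

lemma act_scale: "act m P (\<lambda>i. c * u i) = (\<lambda>i. c * act m P u i)"
  unfolding act_def by (simp add: algebra_simps sum_distrib_left)

lemma orth_proj_herm: assumes "orth_proj m P" "r < m" "c < m" shows "P $$ (r,c) = cnj (P $$ (c,r))"
proof -
  have P: "P \<in> carrier_mat m m" and A: "adj P = P" using assms unfolding orth_proj_def by auto
  have "P $$ (r,c) = adj P $$ (r,c)" using A by simp
  also have "\<dots> = cnj (P $$ (c,r))" using P assms unfolding adj_def by auto
  finally show ?thesis .
qed

lemma orth_proj_idem: assumes "orth_proj m P" "i < m" "j < m" shows "(\<Sum>k<m. P $$ (i,k) * P $$ (k,j)) = P $$ (i,j)"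
proof -
  have P: "P \<in> carrier_mat m m" and A: "P * P = P" using assms unfolding orth_proj_def by auto
  have "(P * P) $$ (i,j) = P $$ (i,j)" using A by simp
  then show ?thesis using P assms by (simp add: scalar_prod_def atLeast0LessThan)
qed

lemma proj_ip_act: assumes "orth_proj m P" shows "ip m (act m P u) v = ip m u (act m P v)"
proof -
  have "ip m (act m P u) v = (\<Sum>i<m. \<Sum>c<m. cnj (P $$ (i,c)) * cnj (u c) * v i)"
    unfolding ip_def act_def by (simp add: sum_distrib_left sum_distrib_right algebra_simps)
  also have "\<dots> = (\<Sum>i<m. \<Sum>c<m. P $$ (c,i) * cnj (u c) * v i)"
  proof (intro sum.cong refl)
    fix i c assume "i \<in> {..<m}" "c \<in> {..<m}"
    then have "P $$ (c,i) = cnj (P $$ (i,c))" using orth_proj_herm[OF assms] by blast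
    then show "cnj (P $$ (i,c)) * cnj (u c) * v i = P $$ (c,i) * cnj (u c) * v i" by simp
  qed
  also have "\<dots> = (\<Sum>c<m. \<Sum>i<m. P $$ (c,i) * cnj (u c) * v i)" by (rule sum.swap)
  also have "\<dots> = ip m u (act m P v)"
    unfolding ip_def act_def by (simp add: sum_distrib_left algebra_simps)
  finally show ?thesis .
qed

lemma proj_act_idem: assumes "orth_proj m P" "i < m" shows "act m P (act m P v) i = act m P v i"
proof -
  have "act m P (act m P v) i = (\<Sum>c<m. \<Sum>k<m. P $$ (i,c) * P $$ (c,k) * v k)"
    unfolding act_def by (simp add: sum_distrib_left mult.assoc)
  also have "\<dots> = (\<Sum>k<m. \<Sum>c<m. P $$ (i,c) * P $$ (c,k) * v k)" by (rule sum.swap)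
  also have "\<dots> = (\<Sum>k<m. P $$ (i,k) * v k)"
  proof (rule sum.cong[OF refl])
    fix k assume "k \<in> {..<m}"
    then have "(\<Sum>c<m. P $$ (i,c) * P $$ (c,k)) = P $$ (i,k)" using orth_proj_idem[OF assms(1,2)] by auto
    then show "(\<Sum>c<m. P $$ (i,c) * P $$ (c,k) * v k) = P $$ (i,k) * v k"
      by (simp add: sum_distrib_right[symmetric])
  qed
  finally show ?thesis unfolding act_def by simp
qed

lemma proj_qform: assumes "orth_proj m P" shows "qform m (\<lambda>r c. P $$ (r,c)) v = complex_of_real (sqnorm m (act m P v))"
proof -
  have "qform m (\<lambda>r c. P $$ (r,c)) v = ip m v (act m P v)" by (rule qform_act)
  also have "\<dots> = ip m v (act m P (act m P v))"
    by (rule ip_cong) (auto simp: proj_act_idem[OF assms])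
  also have "\<dots> = ip m (act m P v) (act m P v)" by (rule proj_ip_act[OF assms, symmetric])
  finally show ?thesis by (simp add: ip_self)
qed

lemma proj_ip_act_self: assumes "orth_proj m P" shows "ip m v (act m P v) = complex_of_real (sqnorm m (act m P v))"
  using proj_qform[OF assms] qform_act by metis

lemma proj_contract: assumes "orth_proj m P" shows "sqnorm m (act m P v) \<le> sqnorm m v"
proof -
  define w where "w = (\<lambda>i. v i - act m P v i)"
  have "sqnorm m v = sqnorm m (\<lambda>i. act m P v i + w i)" unfolding w_def by simp
  also have "\<dots> = sqnorm m (act m P v) + sqnorm m w + 2 * Re (ip m (act m P v) w)" by (rule sqnorm_add)
  also have "ip m (act m P v) w = 0"
  proof -
    have "ip m (act m P v) w = ip m (act m P v) v - ip m (act m P v) (act m P v)"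
      unfolding w_def ip_def by (simp add: sum_subtractf algebra_simps)
    also have "\<dots> = ip m v (act m P v) - ip m (act m P v) (act m P v)"
      by (simp add: proj_ip_act[OF assms])
    also have "\<dots> = 0" using proj_ip_act_self[OF assms, of v] by (simp add: ip_self)
    finally show ?thesis .
  qed
  finally show ?thesis using sqnorm_nonneg[of m w] by simp
qed

lemma norm_ip_unit_le: assumes "sqnorm m q = 1" shows "(cmod (ip m q y))\<^sup>2 \<le> sqnorm m y"
proof -
  define a where "a = ip m q y"
  have i1: "ip m y (\<lambda>i. (- a) * q i) = - a * cnj a"
    unfolding ip_scale_right a_def by (simp add: ip_swap[of m y q])
  have i2: "Re (- a * cnj a) = - (cmod a)\<^sup>2"
    using complex_norm_square[of a] by (metis Re_complex_of_real minus_mult_left uminus_complex.sel(1))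
  have "0 \<le> sqnorm m (\<lambda>i. y i + (- a) * q i)" by (rule sqnorm_nonneg)
  also have "\<dots> = sqnorm m y + (cmod a)\<^sup>2 + 2 * Re (ip m y (\<lambda>i. (- a) * q i))"
    using sqnorm_add[of m y "\<lambda>i. (- a) * q i"] sqnorm_scale[of m "- a" q] assms by simp
  finally have "0 \<le> sqnorm m y + (cmod a)\<^sup>2 + 2 * Re (ip m y (\<lambda>i. (- a) * q i))" .
  then have "0 \<le> sqnorm m y + (cmod a)\<^sup>2 + 2 * (- (cmod a)\<^sup>2)" by (simp only: i1 i2)
  then show ?thesis unfolding a_def by simp
qed

lemma mult_entry: "A \<in> carrier_mat n n \<Longrightarrow> B \<in> carrier_mat n n \<Longrightarrow> i < n \<Longrightarrow> j < n \<Longrightarrow>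
  (A * B) $$ (i,j) = (\<Sum>k<n. A $$ (i,k) * B $$ (k,j))"
  by (simp add: scalar_prod_def atLeast0LessThan)

lemma orth_proj_psd: assumes "orth_proj m P" shows "psd m P"
proof -
  have P: "P \<in> carrier_mat m m" and A: "adj P = P" using assms unfolding orth_proj_def by auto
  have "0 \<le> Re (cinner v (P *\<^sub>v v))" if v: "v \<in> carrier_vec m" for v
  proof -
    have vw: "v = vec m (\<lambda>i. v $ i)" using v by auto
    have "cinner v (P *\<^sub>v v) = qform m (\<lambda>r c. P $$ (r,c)) (\<lambda>i. v $ i)"
      using cinner_mult_vec_qform[OF P, of "\<lambda>i. v $ i"] vw by simp
    also have "\<dots> = complex_of_real (sqnorm m (act m P (\<lambda>i. v $ i)))" by (rule proj_qform[OF assms])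
    finally show ?thesis using sqnorm_nonneg by simp
  qed
  then show ?thesis unfolding psd_def using P A by blast
qed

lemma proj_act_zero_of_psd_sum_kernel:
  assumes P: "orth_proj m P" and S: "psd m S"
    and Z: "\<And>r. r < m \<Longrightarrow> (\<Sum>s<m. (P $$ (r,s) + S $$ (r,s)) * x s) = 0" and r: "r < m"
  shows "act m P x r = 0"
proof -
  have "qform m (\<lambda>r c. P $$ (r,c)) x + qform m (\<lambda>r c. S $$ (r,c)) x =
      (\<Sum>r<m. cnj (x r) * (\<Sum>s<m. (P $$ (r,s) + S $$ (r,s)) * x s))"
    unfolding qform_def by (simp add: sum.distrib[symmetric] sum_distrib_left algebra_simps)
  also have "\<dots> = 0" using Z by simp
  finally have q0: "Re (qform m (\<lambda>r c. P $$ (r,c)) x) + Re (qform m (\<lambda>r c. S $$ (r,c)) x) = 0"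
    by (metis plus_complex.sel(1) zero_complex.sel(1))
  have "0 \<le> Re (qform m (\<lambda>r c. S $$ (r,c)) x)" "0 \<le> Re (qform m (\<lambda>r c. P $$ (r,c)) x)"
    using psd_imp_psd_form[OF S] psd_imp_psd_form[OF orth_proj_psd[OF P]] unfolding psd_form_def by blast+
  then have "Re (qform m (\<lambda>r c. P $$ (r,c)) x) = 0" using q0 by linarith
  then have "sqnorm m (act m P x) = 0" using proj_qform[OF P, of x] by simp
  then show ?thesis using sqnorm_zero r by blast
qed

text \<open>S commutes with P = S^2, so every column x of P - S satisfies (P + S) x = 0. Positivity then
  gives P x = 0, that is P S = P, and the squared norm of x is a diagonal entry of P - P S - S P + S^2 = 0.\<close>
lemma psd_sqrt_of_proj_unique:
  assumes P: "orth_proj m P" and S: "psd m S" and SS: "S * S = P"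
  shows "S = P"
proof -
  have Pc: "P \<in> carrier_mat m m" using P unfolding orth_proj_def by auto
  have Sc: "S \<in> carrier_mat m m" using psd_carrier[OF S] .
  have Sh: "S $$ (r,c) = cnj (S $$ (c,r))" if "r < m" "c < m" for r c
    using psd_imp_psd_form[OF S] that unfolding psd_form_def by blast
  have ss: "(\<Sum>k<m. S $$ (i,k) * S $$ (k,j)) = P $$ (i,j)" if "i < m" "j < m" for i j
    using mult_entry[OF Sc Sc that] SS by simp
  have pp: "(\<Sum>k<m. P $$ (i,k) * P $$ (k,j)) = P $$ (i,j)" if "i < m" "j < m" for i j
    using orth_proj_idem[OF P that] .
  have SPm: "S * P = P * S"
  proof -
    have "S * P = S * (S * S)" using SS by simp
    also have "\<dots> = S * S * S" using assoc_mult_mat[OF Sc Sc Sc] by simp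
    finally show ?thesis using SS by simp
  qed
  have sp: "(\<Sum>k<m. S $$ (i,k) * P $$ (k,j)) = (\<Sum>k<m. P $$ (i,k) * S $$ (k,j))" if "i < m" "j < m" for i j
    using mult_entry[OF Sc Pc that] mult_entry[OF Pc Sc that] SPm by simp
  show ?thesis
  proof (rule eq_matI)
    show "dim_row S = dim_row P" "dim_col S = dim_col P" using Sc Pc by auto
    fix r0 c assume "r0 < dim_row P" "c < dim_col P"
    then have r0: "r0 < m" and c: "c < m" using Pc by auto
    define x where "x = (\<lambda>r. P $$ (r,c) - S $$ (r,c))"
    define ps where "ps = (\<lambda>r. \<Sum>k<m. P $$ (r,k) * S $$ (k,c))"
    have Z: "(\<Sum>s<m. (P $$ (r,s) + S $$ (r,s)) * x s) = 0" if r: "r < m" for r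
    proof -
      have "(\<Sum>s<m. (P $$ (r,s) + S $$ (r,s)) * x s) =
        (\<Sum>s<m. P $$ (r,s) * P $$ (s,c)) - (\<Sum>s<m. P $$ (r,s) * S $$ (s,c))
        + (\<Sum>s<m. S $$ (r,s) * P $$ (s,c)) - (\<Sum>s<m. S $$ (r,s) * S $$ (s,c))"
        unfolding x_def by (simp add: algebra_simps sum.distrib sum_subtractf)
      also have "\<dots> = 0" using pp[OF r c] ss[OF r c] sp[OF r c] by simp
      finally show ?thesis .
    qed
    have Px: "act m P x r = 0" if "r < m" for r by (rule proj_act_zero_of_psd_sum_kernel[OF P S Z that])
    have psr: "ps r = P $$ (r,c)" if r: "r < m" for r
    proof -
      have "act m P x r = (\<Sum>s<m. P $$ (r,s) * P $$ (s,c)) - ps r"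
        unfolding act_def x_def ps_def by (simp add: algebra_simps sum_subtractf)
      then show ?thesis using Px[OF r] pp[OF r c] by simp
    qed
    have spr: "(\<Sum>s<m. S $$ (r,s) * P $$ (s,c)) = P $$ (r,c)" if r: "r < m" for r
      using sp[OF r c] psr[OF r] unfolding ps_def by simp
    have "complex_of_real (sqnorm m x) = (\<Sum>k<m. cnj (x k) * x k)" using ip_self[of m x] unfolding ip_def by simp
    also have "\<dots> = (\<Sum>k<m. (P $$ (c,k) - S $$ (c,k)) * x k)"
    proof (rule sum.cong[OF refl])
      fix k assume "k \<in> {..<m}"
      then have k: "k < m" by simp
      have "cnj (x k) = P $$ (c,k) - S $$ (c,k)"
        unfolding x_def using orth_proj_herm[OF P c k] Sh[OF c k] by simp
      then show "cnj (x k) * x k = (P $$ (c,k) - S $$ (c,k)) * x k" by simp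
    qed
    also have "\<dots> = (\<Sum>k<m. P $$ (c,k) * P $$ (k,c)) - ps c - (\<Sum>k<m. S $$ (c,k) * P $$ (k,c)) + (\<Sum>k<m. S $$ (c,k) * S $$ (k,c))"
      unfolding x_def ps_def by (simp add: algebra_simps sum.distrib sum_subtractf)
    also have "\<dots> = 0" using pp[OF c c] psr[OF c] spr[OF c] ss[OF c c] by simp
    finally have "sqnorm m x = 0" by simp
    then have "x r0 = 0" using sqnorm_zero r0 by blast
    then show "S $$ (r0,c) = P $$ (r0,c)" unfolding x_def by simp
  qed
qed

lemma msqrt_proj: assumes "orth_proj m P" shows "msqrt P = P"
proof -
  have Pc: "P \<in> carrier_mat m m" and PP: "P * P = P" using assms unfolding orth_proj_def by auto
  have dr: "dim_row P = m" using Pc by auto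
  show ?thesis unfolding msqrt_def dr
  proof (rule the_equality)
    show "psd m P \<and> P * P = P" using orth_proj_psd[OF assms] PP by simp
    fix S assume "psd m S \<and> S * S = P"
    then show "S = P" using psd_sqrt_of_proj_unique[OF assms] by blast
  qed
qed

lemma act_cong: "(\<And>j. j < m \<Longrightarrow> f j = g j) \<Longrightarrow> act m P f i = act m P g i"
  unfolding act_def by (rule sum.cong) auto

lemma mult_mat_vec_act: assumes "P \<in> carrier_mat m m" "u \<in> carrier_vec m" "i < m"
  shows "(P *\<^sub>v u) $ i = act m P (\<lambda>j. u $ j) i"
  using assms unfolding act_def by (simp add: scalar_prod_def atLeast0LessThan)

lemma vnorm_sqnorm: assumes "u \<in> carrier_vec m" shows "vnorm u = sqrt (sqnorm m (\<lambda>j. u $ j))"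
  using assms unfolding vnorm_def sqnorm_def by simp

lemma vnorm_mult_mult_vec: assumes P: "P \<in> carrier_mat m m" and Q: "Q \<in> carrier_mat m m" and v: "v \<in> carrier_vec m"
  shows "vnorm ((P * Q) *\<^sub>v v) = sqrt (sqnorm m (act m P (act m Q (\<lambda>j. v $ j))))"
proof -
  have Qv: "Q *\<^sub>v v \<in> carrier_vec m" using Q v by auto
  have e: "(P * Q) *\<^sub>v v = P *\<^sub>v (Q *\<^sub>v v)" using P Q v by simp
  have c: "(P * Q) *\<^sub>v v \<in> carrier_vec m" using P Q v by auto
  have "sqnorm m (\<lambda>j. ((P * Q) *\<^sub>v v) $ j) = sqnorm m (act m P (act m Q (\<lambda>j. v $ j)))"
  proof (rule sqnorm_cong)
    fix i assume i: "i < m"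
    have "((P * Q) *\<^sub>v v) $ i = act m P (\<lambda>j. (Q *\<^sub>v v) $ j) i" unfolding e using mult_mat_vec_act[OF P Qv i] .
    also have "\<dots> = act m P (act m Q (\<lambda>j. v $ j)) i"
      by (rule act_cong) (use mult_mat_vec_act[OF Q v] in auto)
    finally show "((P * Q) *\<^sub>v v) $ i = act m P (act m Q (\<lambda>j. v $ j)) i" .
  qed
  then show ?thesis using vnorm_sqnorm[OF c] by simp
qed

lemma op_norm_proj_mult:
  assumes P: "orth_proj m P" and Q: "orth_proj m Q" and m: "0 < m"
  shows "0 \<le> op_norm (P * Q)"
    "t < op_norm (P * Q) \<Longrightarrow> \<exists>w. sqnorm m w = 1 \<and> t < sqrt (sqnorm m (act m P (act m Q w)))"
proof -
  have Pc: "P \<in> carrier_mat m m" and Qc: "Q \<in> carrier_mat m m" using P Q unfolding orth_proj_def by auto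
  have dc: "dim_col (P * Q) = m" using Qc by auto
  define X where "X = {vnorm ((P * Q) *\<^sub>v v) | v. v \<in> carrier_vec (dim_col (P * Q)) \<and> vnorm v = 1}"
  have opX: "op_norm (P * Q) = Sup X" unfolding op_norm_def X_def ..
  have mem: "x \<in> X \<longleftrightarrow> (\<exists>v. v \<in> carrier_vec m \<and> sqnorm m (\<lambda>j. v $ j) = 1 \<and> x = sqrt (sqnorm m (act m P (act m Q (\<lambda>j. v $ j)))))" for x
  proof -
    have vn: "vnorm v = 1 \<longleftrightarrow> sqnorm m (\<lambda>j. v $ j) = 1" if "v \<in> carrier_vec m" for v
      using vnorm_sqnorm[OF that] sqnorm_nonneg by auto
    show ?thesis
    proof
      assume "x \<in> X"
      then obtain v where v: "x = vnorm ((P * Q) *\<^sub>v v)" "v \<in> carrier_vec m" "vnorm v = 1"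
        unfolding X_def dc by blast
      then show "\<exists>v. v \<in> carrier_vec m \<and> sqnorm m (\<lambda>j. v $ j) = 1 \<and> x = sqrt (sqnorm m (act m P (act m Q (\<lambda>j. v $ j))))"
        using vn vnorm_mult_mult_vec[OF Pc Qc] by blast
    next
      assume "\<exists>v. v \<in> carrier_vec m \<and> sqnorm m (\<lambda>j. v $ j) = 1 \<and> x = sqrt (sqnorm m (act m P (act m Q (\<lambda>j. v $ j))))"
      then obtain v where v: "v \<in> carrier_vec m" "sqnorm m (\<lambda>j. v $ j) = 1" "x = sqrt (sqnorm m (act m P (act m Q (\<lambda>j. v $ j))))"
        by blast
      have "x = vnorm ((P * Q) *\<^sub>v v)" "vnorm v = 1" using v vn vnorm_mult_mult_vec[OF Pc Qc] by auto
      then show "x \<in> X" unfolding X_def dc using v by blast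
    qed
  qed
  have le1: "x \<le> 1" if xX: "x \<in> X" for x
  proof -
    obtain v where v: "v \<in> carrier_vec m" "sqnorm m (\<lambda>j. v $ j) = 1" "x = sqrt (sqnorm m (act m P (act m Q (\<lambda>j. v $ j))))"
      using mem[THEN iffD1, OF xX] by blast
    have "sqnorm m (act m P (act m Q (\<lambda>j. v $ j))) \<le> sqnorm m (act m Q (\<lambda>j. v $ j))" by (rule proj_contract[OF P])
    also have "\<dots> \<le> 1" using proj_contract[OF Q, of "\<lambda>j. v $ j"] v by simp
    finally show ?thesis using v by simp
  qed
  have ge0: "0 \<le> x" if "x \<in> X" for x using mem[THEN iffD1, OF that] sqnorm_nonneg by auto
  define v0 where "v0 = vec m (\<lambda>i. if i = 0 then 1 else (0::complex))"
  have "sqnorm m (\<lambda>j. v0 $ j) = 1"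
    using sqnorm_basis[OF m] by (simp add: v0_def sqnorm_def)
  then have ne: "sqrt (sqnorm m (act m P (act m Q (\<lambda>j. v0 $ j)))) \<in> X"
    by (intro mem[THEN iffD2] exI[of _ v0]) (simp add: v0_def)
  then have Xne: "X \<noteq> {}" by auto
  have bdd: "bdd_above X" unfolding bdd_above_def using le1 by blast
  show "0 \<le> op_norm (P * Q)" unfolding opX using cSup_upper[OF ne bdd] ge0[OF ne] by linarith
  assume "t < op_norm (P * Q)"
  then obtain x where "x \<in> X" "t < x" unfolding opX using less_cSup_iff[OF Xne bdd] by blast
  then show "\<exists>w. sqnorm m w = 1 \<and> t < sqrt (sqnorm m (act m P (act m Q w)))" using mem[THEN iffD1] by blast
qed

lemma sqnorm_scale_real: "sqnorm m (\<lambda>i. complex_of_real a * v i) = a\<^sup>2 * sqnorm m v"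
  using sqnorm_scale[of m "complex_of_real a" v] by simp

text \<open>For a unit vector q in the range of Q with \<tau> = |Pq|, the vector q + Pq/\<tau> has squared norm 2 + 2\<tau>,
  and both of its projections have squared norm at least (1 + \<tau>)^2.\<close>
lemma proj_pair_unit_vector_of_range:
  assumes P: "orth_proj m P" and Q: "orth_proj m Q" and q: "sqnorm m q = 1"
    and Qq: "\<And>i. i < m \<Longrightarrow> act m Q q i = q i" and tpos: "0 < \<tau>" and tsq: "\<tau>\<^sup>2 = sqnorm m (act m P q)"
  shows "\<exists>\<psi>. sqnorm m \<psi> = 1 \<and> 1 + \<tau> \<le> sqnorm m (act m P \<psi>) + sqnorm m (act m Q \<psi>)"
proof -
  define x where "x = act m P q"
  have iqx: "ip m q x = complex_of_real (\<tau>\<^sup>2)" unfolding x_def tsq by (rule proj_ip_act_self[OF P])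
  have xsq: "sqnorm m x = \<tau>\<^sup>2" unfolding x_def tsq ..
  define \<beta> where "\<beta> = 1 / \<tau>"
  define \<psi>0 where "\<psi>0 = (\<lambda>i. q i + complex_of_real \<beta> * x i)"
  have n0: "sqnorm m \<psi>0 = 2 + 2 * \<tau>"
  proof -
    have "sqnorm m \<psi>0 = 1 + \<beta>\<^sup>2 * \<tau>\<^sup>2 + 2 * (\<beta> * \<tau>\<^sup>2)"
      unfolding \<psi>0_def sqnorm_add sqnorm_scale_real ip_scale_right iqx q xsq by simp
    also have "\<dots> = 2 + 2 * \<tau>" unfolding \<beta>_def using tpos by (simp add: power2_eq_square field_simps)
    finally show ?thesis .
  qed
  have qP: "sqnorm m (act m P \<psi>0) = (1 + \<tau>)\<^sup>2"
  proof -
    have "sqnorm m (act m P \<psi>0) = sqnorm m (\<lambda>i. complex_of_real (1 + \<beta>) * x i)"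
    proof (rule sqnorm_cong)
      fix i assume i: "i < m"
      have "act m P \<psi>0 i = act m P q i + complex_of_real \<beta> * act m P x i"
        unfolding \<psi>0_def act_add act_scale by simp
      also have "act m P x i = x i" unfolding x_def using proj_act_idem[OF P i] .
      finally show "act m P \<psi>0 i = complex_of_real (1 + \<beta>) * x i" unfolding x_def by (simp add: algebra_simps)
    qed
    also have "\<dots> = (1 + \<beta>)\<^sup>2 * \<tau>\<^sup>2" unfolding sqnorm_scale_real xsq ..
    also have "\<dots> = (1 + \<tau>)\<^sup>2" unfolding \<beta>_def using tpos by (simp add: power2_eq_square field_simps)
    finally show ?thesis .
  qed
  have qQ: "(1 + \<tau>)\<^sup>2 \<le> sqnorm m (act m Q \<psi>0)"
  proof -
    have "ip m q (act m Q \<psi>0) = ip m (act m Q q) \<psi>0" by (rule proj_ip_act[OF Q, symmetric])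
    also have "\<dots> = ip m q \<psi>0" by (rule ip_cong) (auto simp: Qq)
    also have "\<dots> = complex_of_real (1 + \<tau>)"
      unfolding \<psi>0_def ip_add_right ip_scale_right ip_self q iqx \<beta>_def using tpos by (simp add: power2_eq_square)
    finally have ie: "ip m q (act m Q \<psi>0) = complex_of_real (1 + \<tau>)" .
    have "cmod (complex_of_real (1 + \<tau>)) = 1 + \<tau>" using tpos by (simp only: norm_of_real)
    then show ?thesis using norm_ip_unit_le[OF q, of "act m Q \<psi>0"] unfolding ie by simp
  qed
  define \<gamma> where "\<gamma> = 1 / sqrt (2 + 2 * \<tau>)"
  have g2: "\<gamma>\<^sup>2 = 1 / (2 + 2 * \<tau>)" unfolding \<gamma>_def using tpos by (simp add: power_divide)
  define \<psi> where "\<psi> = (\<lambda>i. complex_of_real \<gamma> * \<psi>0 i)"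
  have "sqnorm m \<psi> = 1" unfolding \<psi>_def sqnorm_scale_real n0 g2 using tpos by simp
  moreover have "1 + \<tau> \<le> sqnorm m (act m P \<psi>) + sqnorm m (act m Q \<psi>)"
  proof -
    have "1 + \<tau> = \<gamma>\<^sup>2 * ((1 + \<tau>)\<^sup>2 + (1 + \<tau>)\<^sup>2)"
      unfolding g2 using tpos by (simp add: power2_eq_square field_simps)
    also have "\<dots> \<le> \<gamma>\<^sup>2 * (sqnorm m (act m P \<psi>0) + sqnorm m (act m Q \<psi>0))"
      using qP qQ by (intro mult_left_mono) auto
    also have "\<dots> = sqnorm m (act m P \<psi>) + sqnorm m (act m Q \<psi>)"
      unfolding \<psi>_def act_scale sqnorm_scale_real by (simp add: algebra_simps)
    finally show ?thesis .
  qed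
  ultimately show ?thesis by blast
qed

lemma proj_range_unit_vector_approx:
  assumes P: "orth_proj m P" and Q: "orth_proj m Q" and m: "0 < m"
    and t0: "0 \<le> t" and t: "t < op_norm (P * Q)"
  obtains q where "sqnorm m q = 1" "\<And>i. i < m \<Longrightarrow> act m Q q i = q i" "t < sqrt (sqnorm m (act m P q))"
proof -
  obtain w where w: "sqnorm m w = 1" and tl: "t < sqrt (sqnorm m (act m P (act m Q w)))"
    using op_norm_proj_mult(2)[OF P Q m t] by blast
  define u where "u = act m Q w"
  define \<mu> where "\<mu> = sqnorm m (act m P u)"
  have nu1: "sqnorm m u \<le> 1" unfolding u_def using proj_contract[OF Q, of w] w by simp
  have mu_nu: "\<mu> \<le> sqnorm m u" unfolding \<mu>_def by (rule proj_contract[OF P])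
  have tmu: "t < sqrt \<mu>" using tl unfolding \<mu>_def u_def .
  then have mu0: "0 < \<mu>" using t0 by (cases "\<mu> = 0") (auto simp: \<mu>_def sqnorm_nonneg less_le)
  then have nu0: "0 < sqnorm m u" using mu_nu by linarith
  define \<alpha> where "\<alpha> = 1 / sqrt (sqnorm m u)"
  define q where "q = (\<lambda>i. complex_of_real \<alpha> * u i)"
  have "sqnorm m q = 1" unfolding q_def sqnorm_scale_real \<alpha>_def using nu0 by (simp add: power_divide)
  moreover have "act m Q q i = q i" if "i < m" for i
    unfolding q_def act_scale u_def using proj_act_idem[OF Q that] by simp
  moreover have "t < sqrt (sqnorm m (act m P q))"
  proof -
    have "\<alpha>\<^sup>2 = 1 / sqnorm m u" unfolding \<alpha>_def using nu0 by (simp add: power_divide)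
    then have "1 \<le> \<alpha>\<^sup>2" using nu0 nu1 by simp
    then have "\<mu> \<le> \<alpha>\<^sup>2 * \<mu>" using mu0 by simp
    also have "\<dots> = sqnorm m (act m P q)" unfolding q_def act_scale sqnorm_scale_real \<mu>_def ..
    finally show ?thesis using tmu by (smt (verit) real_sqrt_le_mono)
  qed
  ultimately show ?thesis by (rule that)
qed

lemma proj_pair_unit_vector:
  assumes P: "orth_proj m P" and Q: "orth_proj m Q" and m: "0 < m"
    and t0: "0 \<le> t" and t: "t < op_norm (P * Q)"
  shows "\<exists>\<psi>. sqnorm m \<psi> = 1 \<and> 1 + t \<le> sqnorm m (act m P \<psi>) + sqnorm m (act m Q \<psi>)"
proof -
  obtain q where q: "sqnorm m q = 1" "\<And>i. i < m \<Longrightarrow> act m Q q i = q i"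
    and tq: "t < sqrt (sqnorm m (act m P q))"
    using proj_range_unit_vector_approx[OF P Q m t0 t] by blast
  have "0 < sqrt (sqnorm m (act m P q))" using t0 tq by linarith
  then obtain \<psi> where "sqnorm m \<psi> = 1"
      "1 + sqrt (sqnorm m (act m P q)) \<le> sqnorm m (act m P \<psi>) + sqnorm m (act m Q \<psi>)"
    using proj_pair_unit_vector_of_range[OF P Q q, of "sqrt (sqnorm m (act m P q))"] sqnorm_nonneg by auto
  then show ?thesis using tq by (intro exI[of _ \<psi>]) auto
qed

lemma proj_nonzero_unit_vector:
  assumes P: "orth_proj m P" and i: "i < m" and j: "j < m" and nz: "P $$ (i,j) \<noteq> 0"
  shows "\<exists>\<psi>. sqnorm m \<psi> = 1 \<and> sqnorm m (act m P \<psi>) = 1"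
proof -
  define x where "x = act m P (\<lambda>k. if k = j then 1 else 0)"
  have "x i = P $$ (i,j)"
  proof -
    have "x i = (\<Sum>c<m. if c = j then P $$ (i,c) else 0)" unfolding x_def act_def by (rule sum.cong) auto
    then show ?thesis using j by simp
  qed
  then have nx: "0 < sqnorm m x" using nz i sqnorm_zero[of m x] sqnorm_nonneg[of m x] by force
  define \<psi> where "\<psi> = (\<lambda>k. complex_of_real (1 / sqrt (sqnorm m x)) * x k)"
  have n1: "sqnorm m \<psi> = 1" unfolding \<psi>_def sqnorm_scale_real using nx by (simp add: power_divide)
  moreover have "sqnorm m (act m P \<psi>) = sqnorm m \<psi>"
  proof (rule sqnorm_cong)
    fix k assume "k < m"
    then show "act m P \<psi> k = \<psi> k" unfolding \<psi>_def act_scale x_def using proj_act_idem[OF P] by simp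
  qed
  ultimately show ?thesis by auto
qed

lemma power_half_bound_of_op_norm:
  fixes u :: real
  assumes P: "orth_proj m P" and Q: "orth_proj m Q" and m: "0 < m" and half: "(1/2)^n \<le> u"
    and achieve: "\<And>\<psi>. sqnorm m \<psi> = 1 \<Longrightarrow> ((sqnorm m (act m P \<psi>) + sqnorm m (act m Q \<psi>)) / 2)^n \<le> u"
  shows "((1 + op_norm (P * Q)) / 2)^n \<le> u"
proof -
  define s where "s = op_norm (P * Q)"
  have "0 \<le> s" unfolding s_def by (rule op_norm_proj_mult(1)[OF P Q m])
  show ?thesis
  proof (cases "s = 0")
    case True
    then show ?thesis using half unfolding s_def by simp
  next
    case False
    then have s: "0 < s" using \<open>0 \<le> s\<close> by simp
    have "((\<lambda>t. ((1 + t) / 2)^n) \<longlongrightarrow> ((1 + s) / 2)^n) (at_left s)" by (intro tendsto_intros) auto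
    moreover have "\<forall>\<^sub>F t in at_left s. ((1 + t) / 2)^n \<le> u"
      using eventually_at_left_real[OF s]
    proof (rule eventually_mono)
      fix t assume t: "t \<in> {0<..<s}"
      then obtain \<psi> where "sqnorm m \<psi> = 1" "1 + t \<le> sqnorm m (act m P \<psi>) + sqnorm m (act m Q \<psi>)"
        using proj_pair_unit_vector[OF P Q m, of t] unfolding s_def by auto
      moreover have "0 \<le> (1 + t) / 2" using t by simp
      ultimately show "((1 + t) / 2)^n \<le> u"
        using achieve[of \<psi>] power_mono[of "(1 + t) / 2" _ n] by (smt (verit) divide_right_mono)
    qed
    ultimately show ?thesis unfolding s_def
      by (rule tendsto_upperbound) (simp add: trivial_limit_at_left_real)
  qed
qed

section \<open>The repeated game with two questions\<close>

lemma povm_nonzero_entry: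
  assumes "povm d S P" "0 < d"
  obtains a i j where "a \<in> S" "i < d" "j < d" "P a $$ (i,j) \<noteq> 0"
proof -
  have "(\<Sum>a\<in>S. P a $$ (0,0)) = 1" using assms unfolding povm_iff by simp
  then obtain a where "a \<in> S" "P a $$ (0,0) \<noteq> 0" by (metis sum.neutral zero_neq_one)
  then show ?thesis using that assms(2) by blast
qed

lemma Max_pair_obtain:
  assumes "finite A" "A \<noteq> {}"
  obtains a b where "a \<in> A" "b \<in> A" "Max {f a b | a b. a \<in> A \<and> b \<in> A} = f a b"
proof -
  have "{f a b | a b. a \<in> A \<and> b \<in> A} = (\<lambda>p. f (fst p) (snd p)) ` (A \<times> A)" by force
  then have "Max {f a b | a b. a \<in> A \<and> b \<in> A} \<in> (\<lambda>p. f (fst p) (snd p)) ` (A \<times> A)"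
    using assms by (auto intro!: Max_in)
  then show ?thesis using that by auto
qed

lemma uvalue_rep_binary_ge:
  fixes R :: "'a \<Rightarrow> nat \<Rightarrow> complex mat"
  assumes G: "moe_game {0,1} (\<lambda>_. 1/2) Ans m R" and a: "a \<in> Ans" and b: "b \<in> Ans"
    and Pa: "orth_proj m (R a 0)" and Pb: "orth_proj m (R b 1)" and \<psi>: "sqnorm m \<psi> = 1"
  shows "((sqnorm m (act m (R a 0) \<psi>) + sqnorm m (act m (R b 1) \<psi>)) / 2)^n
    \<le> uvalue (rep_set n {0,1}) (rep_pi (\<lambda>_. 1/2)) (rep_set n Ans) (m^n) (rep_R R)"
proof -
  have tr: "mtrace (P * outer m \<psi>) = complex_of_real (sqnorm m (act m P \<psi>))" if "orth_proj m P" for P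
    using that mtrace_mult_outer proj_qform unfolding orth_proj_def by simp
  have "(\<Sum>x\<in>{0::nat,1}. 1/2 * Re (mtrace (R (if x = 0 then a else b) x * outer m \<psi>)))^n
      \<le> uvalue (rep_set n {0,1}) (rep_pi (\<lambda>_. 1/2)) (rep_set n Ans) (m^n) (rep_R R)"
    using a b by (intro det_value_pow_le_uvalue_rep[OF G _ density_outer[OF \<psi>]]) auto
  then show ?thesis using tr[OF Pa] tr[OF Pb] by (simp add: add_divide_distrib)
qed

lemma uvalue_rep_binary_ge_half:
  fixes R :: "'a \<Rightarrow> nat \<Rightarrow> complex mat"
  assumes G: "moe_game {0,1} (\<lambda>_. 1/2) Ans m R" and proj: "\<forall>a\<in>Ans. \<forall>x\<in>{0,1}. orth_proj m (R a x)"
  shows "(1/2)^n \<le> uvalue (rep_set n {0,1}) (rep_pi (\<lambda>_. 1/2)) (rep_set n Ans) (m^n) (rep_R R)"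
proof -
  have m: "0 < m" and R0: "povm m Ans (\<lambda>a. R a 0)" using G unfolding moe_game_def by auto
  obtain a i j where a: "a \<in> Ans" and "i < m" "j < m" "R a 0 $$ (i,j) \<noteq> 0"
    by (rule povm_nonzero_entry[OF R0 m])
  moreover have Pa0: "orth_proj m (R a 0)" and Pa1: "orth_proj m (R a 1)" using proj a by simp_all
  ultimately obtain \<psi> where \<psi>: "sqnorm m \<psi> = 1" "sqnorm m (act m (R a 0) \<psi>) = 1"
    using proj_nonzero_unit_vector by blast
  have "(1/2)^n \<le> ((1 + sqnorm m (act m (R a 1) \<psi>)) / 2)^n"
    by (intro power_mono) (simp_all add: sqnorm_nonneg)
  also have "\<dots> \<le> uvalue (rep_set n {0,1}) (rep_pi (\<lambda>_. 1/2)) (rep_set n Ans) (m^n) (rep_R R)"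
    using uvalue_rep_binary_ge[OF G a a Pa0 Pa1 \<psi>(1), of n] \<psi>(2) by simp
  finally show ?thesis .
qed

theorem mainTheorem6:
  fixes Ans :: "'a set" and m :: nat and R :: "'a \<Rightarrow> nat \<Rightarrow> complex mat"
    and c :: real and n :: nat
  assumes "moe_game {0,1} (\<lambda>_. 1/2) Ans m R"
    and "\<forall>a\<in>Ans. \<forall>x\<in>{0,1}. orth_proj m (R a x)"
    and "c = Max {(op_norm (msqrt (R a 0) * msqrt (R b 1)))\<^sup>2 | a b. a \<in> Ans \<and> b \<in> Ans}"
    and "0 < n"
  shows "qvalue (rep_set n {0,1}) (rep_pi (\<lambda>_. 1/2)) (rep_set n Ans) (m ^ n) (rep_R R)
           \<ge> uvalue (rep_set n {0,1}) (rep_pi (\<lambda>_. 1/2)) (rep_set n Ans) (m ^ n) (rep_R R)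
       \<and> uvalue (rep_set n {0,1}) (rep_pi (\<lambda>_. 1/2)) (rep_set n Ans) (m ^ n) (rep_R R)
           \<ge> (1/2 + 1/2 * sqrt c) ^ n"
proof -
  note G = assms(1) and proj = assms(2)
  define V where "V = uvalue (rep_set n {0,1}) (rep_pi (\<lambda>_. 1/2)) (rep_set n Ans) (m ^ n) (rep_R R)"
  have fA: "finite Ans" and neA: "Ans \<noteq> {}" and m: "0 < m" using G unfolding moe_game_def by auto
  have achieve: "((sqnorm m (act m (R a 0) \<psi>) + sqnorm m (act m (R b 1) \<psi>)) / 2)^n \<le> V"
    if "a \<in> Ans" "b \<in> Ans" "sqnorm m \<psi> = 1" for a b \<psi>
    unfolding V_def using that proj by (intro uvalue_rep_binary_ge[OF G]) auto
  have half: "(1/2)^n \<le> V" unfolding V_def by (rule uvalue_rep_binary_ge_half[OF G proj])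
  obtain a0 b0 where ab: "a0 \<in> Ans" "b0 \<in> Ans" and c: "c = (op_norm (msqrt (R a0 0) * msqrt (R b0 1)))\<^sup>2"
    using Max_pair_obtain[OF fA neA, of "\<lambda>a b. (op_norm (msqrt (R a 0) * msqrt (R b 1)))\<^sup>2"] assms(3)
    by metis
  have P: "orth_proj m (R a0 0)" and Q: "orth_proj m (R b0 1)" using proj ab by auto
  then have "sqrt c = op_norm (R a0 0 * R b0 1)"
    using c op_norm_proj_mult(1)[OF P Q m] msqrt_proj by simp
  moreover have "((1 + op_norm (R a0 0 * R b0 1)) / 2)^n \<le> V"
    using power_half_bound_of_op_norm[OF P Q m half] achieve ab by blast
  moreover have "V \<le> qvalue (rep_set n {0,1}) (rep_pi (\<lambda>_. 1/2)) (rep_set n Ans) (m ^ n) (rep_R R)"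
    unfolding V_def by (rule uvalue_le_qvalue[OF moe_game_rep[OF G]])
  ultimately show ?thesis unfolding V_def by (simp add: add_divide_distrib)
qed

end
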